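(* Let $V$ be a finite-dimensional real Banach space. Then \[ \mathcal{LE}(V)=\mathcal{PC}(V)=\mathcal{LE}_c(V)=\mathcal{LE}_f(V). \]
   Context: For a function $f$ from a subset $X$ of a metric space $(Z,\rho)$ into a Banach space $V$, its Lipschitz constant is $L(f)=\sup\{\|f(x)-f(y)\|/\rho(x,y): x,y\in X,\ x\neq y\}$ (possibly $+\infty$). The Lipschitz extension constant $\mathcal{LE}(V)$ is the infimum of the constants $c$ such that for every metric space $(Z,\rho)$, every subset $X\subseteq Z$ and every function $f:X\to V$, there is an extension $g:Z\to V$ of $f$ with $L(g)\le cL(f)$ (and $\mathcal{LE}(V)=+\infty$ if no such $c$ exists). $\mathcal{LE}_c(V)$ is defined in the same way but using only compact metric spaces $Z$, and $\mathcal{LE}_f(V)$ using only finite metric spaces $Z$. The projection constant $\mathcal{PC}(V)$ is the infimum of the constants $c$ such that for every Banach space $W$ into which $V$ is isometrically (linearly) embedded there is a linear projection $P$ of $W$ onto $V$ with $\|P\|\le c$ ($+\infty$ if no such $c$ exists). *)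

theory Defs
  imports "HOL-Analysis.Analysis"
begin

definition lip_const :: "'z set \<Rightarrow> ('z \<Rightarrow> 'z \<Rightarrow> real) \<Rightarrow> ('z \<Rightarrow> 'v::real_normed_vector) \<Rightarrow> ereal" where
  "lip_const X \<rho> f =
     Sup (insert 0 {ereal (norm (f x - f y) / \<rho> x y) | x y. x \<in> X \<and> y \<in> X \<and> x \<noteq> y})"

definition LE_admissible :: "('z set \<Rightarrow> ('z \<Rightarrow> 'z \<Rightarrow> real) \<Rightarrow> bool) \<Rightarrow> real \<Rightarrow> 'v::real_normed_vector itself \<Rightarrow> bool" where
  "LE_admissible P c _ \<longleftrightarrow>
     (\<forall>Z \<rho> X (f :: 'z \<Rightarrow> 'v). Metric_space Z \<rho> \<and> P Z \<rho> \<and> X \<subseteq> Z \<longrightarrow>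
        (\<exists>g :: 'z \<Rightarrow> 'v. (\<forall>x\<in>X. g x = f x) \<and> lip_const Z \<rho> g \<le> ereal c * lip_const X \<rho> f))"

definition LE_const_on :: "('z set \<Rightarrow> ('z \<Rightarrow> 'z \<Rightarrow> real) \<Rightarrow> bool) \<Rightarrow> 'v::real_normed_vector itself \<Rightarrow> ereal" where
  "LE_const_on P V = Inf (ereal ` {c. 0 \<le> c \<and> LE_admissible P c V})"

text \<open>LE restricted to metric spaces whose points lie in the type 'z.
  The true LE(V) is the supremum of these over all types 'z.\<close>
definition LE_type :: "'z itself \<Rightarrow> 'v::real_normed_vector itself \<Rightarrow> ereal" where
  "LE_type _ V = LE_const_on (\<lambda>(Z::'z set) \<rho>. True) V"

text \<open>LE_f: finite metric spaces (every finite metric space is isometric to one whose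
  carrier is a finite set of naturals).\<close>
definition LE_f :: "'v::real_normed_vector itself \<Rightarrow> ereal" where
  "LE_f V = LE_const_on (\<lambda>(Z::nat set) \<rho>. finite Z) V"

text \<open>LE_c: compact metric spaces (every compact metric space has cardinality at most
  that of the continuum, hence is isometric to one with carrier a set of reals).\<close>
definition LE_c :: "'v::real_normed_vector itself \<Rightarrow> ereal" where
  "LE_c V = LE_const_on (\<lambda>(Z::real set) \<rho>. compact_space (Metric_space.mtopology Z \<rho>)) V"

text \<open>The true PC(V) is the supremum of these over all types 'w.\<close>
definition PC_admissible :: "'w::real_normed_vector itself \<Rightarrow> real \<Rightarrow> 'v::real_normed_vector itself \<Rightarrow> bool" where
  "PC_admissible _ c _ \<longleftrightarrow>
     (\<forall>T :: 'v \<Rightarrow> 'w. linear T \<and> (\<forall>v. norm (T v) = norm v) \<longrightarrow>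
        (\<exists>P :: 'w \<Rightarrow> 'w. linear P \<and> range P = range T \<and> (\<forall>w. P (P w) = P w) \<and>
           (\<forall>w. norm (P w) \<le> c * norm w)))"

definition PC_type :: "'w::real_normed_vector itself \<Rightarrow> 'v::real_normed_vector itself \<Rightarrow> ereal" where
  "PC_type W V = Inf (ereal ` {c. 0 \<le> c \<and> PC_admissible W c V})"

end

theory Submission
  imports Defs
begin

text \<open>Let V be finite dimensional, so that closed balls of V are compact.

  Extensions from finite subsets: given c L-Lipschitz extensions of f to every finite subset S of
  Z, their values at each point stay in a compact ball, so a limit along an ultrafilter on the
  finite subsets is a c L-Lipschitz extension to Z. Hence LE(V) = LE_c(V) = LE_f(V).

  PC(V) \<le> LE_f(V): extending the inverse of an isometric embedding T : V \<rightarrow> W gives a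
  c-Lipschitz left inverse g of T. An invariant mean on bounded functions V \<rightarrow> V (limits of
  averages over large grids along an ultrafilter) makes g equivariant, g (y + T u) = g y + u, and
  a second invariant mean on W of the increments of g is an additive, bounded, hence linear left
  inverse Q of T with norm at most c; then T \<circ> Q is the projection.

  LE_f(V) \<le> PC(l-infinity): norming functionals (finite-dimensional Hahn-Banach) at a dense
  sequence embed V isometrically into l-infinity, where Lipschitz maps on finite sets extend with
  the same constant coordinatewise by McShane's formula; a projection onto the image of V brings
  the extension back to V.\<close>

section \<open>Lipschitz extension constants\<close>

definition lipschitz_wrt :: "('z \<Rightarrow> 'z \<Rightarrow> real) \<Rightarrow> real \<Rightarrow> 'z set \<Rightarrow> ('z \<Rightarrow> 'v::real_normed_vector) \<Rightarrow> bool" where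
  "lipschitz_wrt \<rho> L X f \<longleftrightarrow> (\<forall>x\<in>X. \<forall>y\<in>X. norm (f x - f y) \<le> L * \<rho> x y)"

definition lipschitz_extendable ::
    "('z set \<Rightarrow> ('z \<Rightarrow> 'z \<Rightarrow> real) \<Rightarrow> bool) \<Rightarrow> real \<Rightarrow> 'v::real_normed_vector itself \<Rightarrow> bool" where
  "lipschitz_extendable P c _ \<longleftrightarrow>
     (\<forall>Z \<rho> X (f :: 'z \<Rightarrow> 'v) L. Metric_space Z \<rho> \<and> P Z \<rho> \<and> X \<subseteq> Z \<and> 0 \<le> L \<and> lipschitz_wrt \<rho> L X f \<longrightarrow>
        (\<exists>g. (\<forall>x\<in>X. g x = f x) \<and> lipschitz_wrt \<rho> (c * L) Z g))"

lemma lipschitz_extendableI: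
  fixes V :: "'v::real_normed_vector itself"
  assumes "\<And>Z \<rho> X (f :: 'z \<Rightarrow> 'v) L. Metric_space Z \<rho> \<Longrightarrow> P Z \<rho> \<Longrightarrow> X \<subseteq> Z \<Longrightarrow> 0 \<le> L \<Longrightarrow>
      lipschitz_wrt \<rho> L X f \<Longrightarrow> \<exists>g. (\<forall>x\<in>X. g x = f x) \<and> lipschitz_wrt \<rho> (c * L) Z g"
  shows "lipschitz_extendable P c V"
  using assms unfolding lipschitz_extendable_def by blast

lemma lipschitz_extendableD:
  fixes V :: "'v::real_normed_vector itself" and f :: "'z \<Rightarrow> 'v"
  assumes "lipschitz_extendable P c V" "Metric_space Z \<rho>" "P Z \<rho>" "X \<subseteq> Z" "0 \<le> L"
    "lipschitz_wrt \<rho> L X f"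
  shows "\<exists>g. (\<forall>x\<in>X. g x = f x) \<and> lipschitz_wrt \<rho> (c * L) Z g"
  using assms unfolding lipschitz_extendable_def by blast

lemma lipschitz_wrt_subset: "lipschitz_wrt \<rho> L Y f \<Longrightarrow> X \<subseteq> Y \<Longrightarrow> lipschitz_wrt \<rho> L X f"
  unfolding lipschitz_wrt_def by blast

lemma lip_const_le_iff_lipschitz_wrt:
  assumes M: "Metric_space Z \<rho>" and "X \<subseteq> Z" "0 \<le> L"
  shows "lip_const X \<rho> f \<le> ereal L \<longleftrightarrow> lipschitz_wrt \<rho> L X f"
proof -
  have "{ereal (norm (f x - f y) / \<rho> x y) |x y. x \<in> X \<and> y \<in> X \<and> x \<noteq> y} =
      (\<lambda>(x, y). ereal (norm (f x - f y) / \<rho> x y)) ` {(x, y). x \<in> X \<and> y \<in> X \<and> x \<noteq> y}"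
    by auto
  then have "lip_const X \<rho> f \<le> ereal L \<longleftrightarrow> (\<forall>x\<in>X. \<forall>y\<in>X. x \<noteq> y \<longrightarrow> norm (f x - f y) / \<rho> x y \<le> L)"
    using \<open>0 \<le> L\<close> unfolding lip_const_def by (auto simp: Sup_le_iff)
  also have "\<dots> \<longleftrightarrow> lipschitz_wrt \<rho> L X f"
  proof -
    have "norm (f x - f y) / \<rho> x y \<le> L \<longleftrightarrow> norm (f x - f y) \<le> L * \<rho> x y"
      if "x \<in> X" "y \<in> X" "x \<noteq> y" for x y
    proof -
      have "0 < \<rho> x y"
        using that \<open>X \<subseteq> Z\<close> Metric_space.nonneg[OF M, of x y] Metric_space.zero[OF M, of x y] by force
      then show ?thesis by (simp add: divide_le_eq)
    qed
    moreover have "\<rho> x x = 0" if "x \<in> X" for x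
      using that \<open>X \<subseteq> Z\<close> Metric_space.zero[OF M] by blast
    ultimately show ?thesis
      unfolding lipschitz_wrt_def by (metis diff_self mult_zero_right norm_zero order_refl)
  qed
  finally show ?thesis .
qed

lemma lipschitz_extendable_if_LE_admissible:
  fixes P :: "'z set \<Rightarrow> ('z \<Rightarrow> 'z \<Rightarrow> real) \<Rightarrow> bool" and V :: "'v::real_normed_vector itself"
  assumes adm: "LE_admissible P c V" and "0 \<le> c"
  shows "lipschitz_extendable P c V"
proof (rule lipschitz_extendableI)
  fix Z \<rho> X L and f :: "'z \<Rightarrow> 'v"
  assume M: "Metric_space Z \<rho>" and "P Z \<rho>" "X \<subseteq> Z" "0 \<le> L" "lipschitz_wrt \<rho> L X f"
  then obtain g where "\<forall>x\<in>X. g x = f x" and g: "lip_const Z \<rho> g \<le> ereal c * lip_const X \<rho> f"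
    using adm unfolding LE_admissible_def by blast
  have "lip_const X \<rho> f \<le> ereal L"
    using lip_const_le_iff_lipschitz_wrt[OF M \<open>X \<subseteq> Z\<close> \<open>0 \<le> L\<close>, of f] \<open>lipschitz_wrt \<rho> L X f\<close> by simp
  then have "ereal c * lip_const X \<rho> f \<le> ereal (c * L)"
    using ereal_mult_left_mono[of _ _ "ereal c"] \<open>0 \<le> c\<close> by fastforce
  with g have "lip_const Z \<rho> g \<le> ereal (c * L)" by (rule order_trans)
  then have "lipschitz_wrt \<rho> (c * L) Z g"
    using lip_const_le_iff_lipschitz_wrt[OF M order_refl, of "c * L" g] \<open>0 \<le> c\<close> \<open>0 \<le> L\<close> by simp
  with \<open>\<forall>x\<in>X. g x = f x\<close> show "\<exists>g. (\<forall>x\<in>X. g x = f x) \<and> lipschitz_wrt \<rho> (c * L) Z g" by blast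
qed

text \<open>For c = 0 this fails: with the convention 0 * \<infinity> = 0 of ereal, a non-Lipschitz f would
  need a constant extension.\<close>
lemma LE_admissible_if_lipschitz_extendable:
  fixes P :: "'z set \<Rightarrow> ('z \<Rightarrow> 'z \<Rightarrow> real) \<Rightarrow> bool" and V :: "'v::real_normed_vector itself"
  assumes ext: "lipschitz_extendable P c V" and "0 < c"
  shows "LE_admissible P c V"
  unfolding LE_admissible_def
proof (intro allI impI, elim conjE)
  fix Z \<rho> X and f :: "'z \<Rightarrow> 'v"
  assume M: "Metric_space Z \<rho>" and "P Z \<rho>" "X \<subseteq> Z"
  have "0 \<le> lip_const X \<rho> f"
    unfolding lip_const_def by (rule Sup_upper) simp
  then consider "lip_const X \<rho> f = \<infinity>" | L where "0 \<le> L" "lip_const X \<rho> f = ereal L"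
    by (cases "lip_const X \<rho> f") auto
  then show "\<exists>g. (\<forall>x\<in>X. g x = f x) \<and> lip_const Z \<rho> g \<le> ereal c * lip_const X \<rho> f"
  proof cases
    case 1
    then show ?thesis using \<open>0 < c\<close> by (intro exI[of _ f]) simp
  next
    case 2
    then have "lipschitz_wrt \<rho> L X f"
      using lip_const_le_iff_lipschitz_wrt[OF M \<open>X \<subseteq> Z\<close> \<open>0 \<le> L\<close>, of f] by simp
    then obtain g where "\<forall>x\<in>X. g x = f x" "lipschitz_wrt \<rho> (c * L) Z g"
      using lipschitz_extendableD[OF ext M \<open>P Z \<rho>\<close> \<open>X \<subseteq> Z\<close> \<open>0 \<le> L\<close>] by blast
    then show ?thesis
      using lip_const_le_iff_lipschitz_wrt[OF M order_refl, of "c * L" g] 2 \<open>0 < c\<close> by auto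
  qed
qed

lemma LE_admissible_iff_lipschitz_extendable:
  "0 < c \<Longrightarrow> LE_admissible P c V \<longleftrightarrow> lipschitz_extendable P c V"
  using lipschitz_extendable_if_LE_admissible LE_admissible_if_lipschitz_extendable
  by (metis less_imp_le)

lemma LE_admissible_mono:
  fixes P :: "'z set \<Rightarrow> ('z \<Rightarrow> 'z \<Rightarrow> real) \<Rightarrow> bool" and V :: "'v::real_normed_vector itself"
  assumes "LE_admissible P c V" "c \<le> c'"
  shows "LE_admissible P c' V"
proof -
  have "ereal c * lip_const X \<rho> f \<le> ereal c' * lip_const X \<rho> f" for X \<rho> and f :: "'z \<Rightarrow> 'v"
    by (rule ereal_mult_right_mono) (auto simp: assms(2) lip_const_def intro: Sup_upper)
  then show ?thesis
    using assms(1) unfolding LE_admissible_def by (blast intro: order.trans)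
qed

lemma PC_admissible_mono:
  assumes "PC_admissible W c V" "c \<le> c'"
  shows "PC_admissible W c' V"
  using assms unfolding PC_admissible_def by (meson mult_right_mono norm_ge_zero order_trans)

lemma Inf_admissible_le:
  assumes AB: "\<And>c. 0 < c \<Longrightarrow> A c \<Longrightarrow> B c" and A_mono: "\<And>c c'. A c \<Longrightarrow> c \<le> c' \<Longrightarrow> A c'"
  shows "Inf (ereal ` {c. 0 \<le> c \<and> B c}) \<le> Inf (ereal ` {c. 0 \<le> c \<and> A c})"
proof (rule Inf_greatest, clarify)
  fix c assume "0 \<le> c" "A c"
  show "Inf (ereal ` {c. 0 \<le> c \<and> B c}) \<le> ereal c"
  proof (rule ereal_le_epsilon2)
    fix e :: real assume "0 < e"
    then have "B (c + e)" using AB A_mono \<open>0 \<le> c\<close> \<open>A c\<close> by simp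
    then have "Inf (ereal ` {c. 0 \<le> c \<and> B c}) \<le> ereal (c + e)"
      using \<open>0 \<le> c\<close> \<open>0 < e\<close> by (intro Inf_lower) auto
    then show "Inf (ereal ` {c. 0 \<le> c \<and> B c}) \<le> ereal c + ereal e" by simp
  qed
qed

lemma Metric_space_image_inj:
  assumes "Metric_space Z \<rho>" "inj_on h Z"
  shows "Metric_space (h ` Z) (\<lambda>a b. \<rho> (inv_into Z h a) (inv_into Z h b))"
proof -
  interpret Metric_space Z \<rho> by fact
  show ?thesis
    by unfold_locales (use assms(2) in \<open>auto simp: commute triangle\<close>)
qed

lemma lipschitz_extendable_transfer:
  fixes P :: "'y set \<Rightarrow> ('y \<Rightarrow> 'y \<Rightarrow> real) \<Rightarrow> bool" and Q :: "'z set \<Rightarrow> ('z \<Rightarrow> 'z \<Rightarrow> real) \<Rightarrow> bool"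
    and V :: "'v::real_normed_vector itself"
  assumes ext: "lipschitz_extendable P c V"
    and emb: "\<And>Z \<rho>. Metric_space Z \<rho> \<Longrightarrow> Q Z \<rho> \<Longrightarrow>
      \<exists>h. inj_on h Z \<and> P (h ` Z) (\<lambda>a b. \<rho> (inv_into Z h a) (inv_into Z h b))"
  shows "lipschitz_extendable Q c V"
proof (rule lipschitz_extendableI)
  fix Z \<rho> X L and f :: "'z \<Rightarrow> 'v"
  assume M: "Metric_space Z \<rho>" and "Q Z \<rho>" "X \<subseteq> Z" "0 \<le> L" and f: "lipschitz_wrt \<rho> L X f"
  obtain h where h: "inj_on h Z" and P: "P (h ` Z) (\<lambda>a b. \<rho> (inv_into Z h a) (inv_into Z h b))"
    using emb[OF M \<open>Q Z \<rho>\<close>] by blast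
  define k where "k = inv_into Z h"
  have M': "Metric_space (h ` Z) (\<lambda>a b. \<rho> (k a) (k b))"
    using Metric_space_image_inj[OF M h] unfolding k_def .
  have P': "P (h ` Z) (\<lambda>a b. \<rho> (k a) (k b))"
    using P unfolding k_def .
  have kh: "k (h x) = x" if "x \<in> Z" for x
    using h that unfolding k_def by simp
  then have "\<forall>x\<in>X. k (h x) = x"
    using \<open>X \<subseteq> Z\<close> by blast
  then have "lipschitz_wrt (\<lambda>a b. \<rho> (k a) (k b)) L (h ` X) (f \<circ> k)"
    using f unfolding lipschitz_wrt_def by simp
  then obtain g where g: "\<forall>x\<in>h ` X. g x = (f \<circ> k) x"
    and "lipschitz_wrt (\<lambda>a b. \<rho> (k a) (k b)) (c * L) (h ` Z) g"
    using lipschitz_extendableD[OF ext M' P' image_mono[OF \<open>X \<subseteq> Z\<close>] \<open>0 \<le> L\<close>] by blast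
  then have "lipschitz_wrt \<rho> (c * L) Z (g \<circ> h)"
    using kh unfolding lipschitz_wrt_def by auto
  moreover have "\<forall>x\<in>X. (g \<circ> h) x = f x"
    using g kh \<open>X \<subseteq> Z\<close> by auto
  ultimately show "\<exists>g. (\<forall>x\<in>X. g x = f x) \<and> lipschitz_wrt \<rho> (c * L) Z g" by blast
qed

lemma lipschitz_extendable_finite_nat_imp_finite:
  assumes "lipschitz_extendable (\<lambda>(Z::nat set) \<rho>. finite Z) c V"
  shows "lipschitz_extendable (\<lambda>(Z::'z set) \<rho>. finite Z) c V"
proof (rule lipschitz_extendable_transfer[OF assms])
  fix Z :: "'z set" and \<rho> :: "'z \<Rightarrow> 'z \<Rightarrow> real"
  assume "(\<lambda>Z \<rho>. finite Z) Z \<rho>"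
  then have "finite Z" by simp
  then obtain h :: "'z \<Rightarrow> nat" where "inj_on h Z"
    using finite_imp_inj_to_nat_seg by blast
  then show "\<exists>h. inj_on h Z \<and> (\<lambda>(Z::nat set) \<rho>. finite Z) (h ` Z) (\<lambda>a b. \<rho> (inv_into Z h a) (inv_into Z h b))"
    using \<open>finite Z\<close> by (intro exI[of _ h]) simp
qed

lemma lipschitz_extendable_compact_real_imp_finite_nat:
  assumes "lipschitz_extendable (\<lambda>(Z::real set) \<rho>. compact_space (Metric_space.mtopology Z \<rho>)) c V"
  shows "lipschitz_extendable (\<lambda>(Z::nat set) \<rho>. finite Z) c V"
proof (rule lipschitz_extendable_transfer[OF assms])
  fix Z :: "nat set" and \<rho> :: "nat \<Rightarrow> nat \<Rightarrow> real"
  assume M: "Metric_space Z \<rho>" and "(\<lambda>Z \<rho>. finite Z) Z \<rho>"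
  let ?\<rho> = "\<lambda>a b. \<rho> (inv_into Z real a) (inv_into Z real b)"
  have inj: "inj_on real Z"
    by (simp add: inj_on_def)
  have "compact_space (Metric_space.mtopology (real ` Z) ?\<rho>)"
    using \<open>finite Z\<close> Metric_space.topspace_mtopology[OF Metric_space_image_inj[OF M inj]]
    unfolding compact_space_def by (simp add: finite_imp_compactin)
  then show "\<exists>h. inj_on h Z \<and> (\<lambda>(Z::real set) \<rho>. compact_space (Metric_space.mtopology Z \<rho>)) (h ` Z) (\<lambda>a b. \<rho> (inv_into Z h a) (inv_into Z h b))"
    using inj by (intro exI[of _ real]) simp
qed

section \<open>Ultrafilters and compactness\<close>

definition ultrafilter :: "'a filter \<Rightarrow> bool" where
  "ultrafilter U \<longleftrightarrow> U \<noteq> bot \<and> (\<forall>P. eventually P U \<or> eventually (\<lambda>x. \<not> P x) U)"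

lemma ultrafilterI_maximal:
  assumes "U \<noteq> bot" and maximal: "\<And>G. G \<noteq> bot \<Longrightarrow> G \<le> U \<Longrightarrow> G = U"
  shows "ultrafilter U"
  unfolding ultrafilter_def
proof (intro conjI allI assms(1) disjCI)
  fix P assume "\<not> eventually (\<lambda>x. \<not> P x) U"
  have "inf U (principal {x. P x}) \<noteq> bot"
  proof
    assume "inf U (principal {x. P x}) = bot"
    then have "eventually (\<lambda>x. False) (inf U (principal {x. P x}))" by simp
    then show False
      using \<open>\<not> eventually (\<lambda>x. \<not> P x) U\<close> unfolding eventually_inf_principal by simp
  qed
  then have "inf U (principal {x. P x}) = U" using maximal by simp
  moreover have "eventually P (inf U (principal {x. P x}))"
    by (simp add: eventually_inf_principal)
  ultimately show "eventually P U" by simp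
qed

lemma eventually_Inf_filter_chain:
  fixes \<G> :: "'a filter set"
  assumes "\<G> \<noteq> {}" and chain: "\<And>G H. G \<in> \<G> \<Longrightarrow> H \<in> \<G> \<Longrightarrow> G \<le> H \<or> H \<le> G"
  shows "eventually P (Inf \<G>) \<longleftrightarrow> (\<exists>G\<in>\<G>. eventually P G)"
proof (rule eventually_Inf_base[OF assms(1)])
  fix G H assume "G \<in> \<G>" "H \<in> \<G>"
  with chain consider "G \<le> H" | "H \<le> G" by blast
  then show "\<exists>K\<in>\<G>. K \<le> inf G H"
    by cases (use \<open>G \<in> \<G>\<close> \<open>H \<in> \<G>\<close> in auto)
qed

lemma ultrafilter_finer_exists:
  fixes F :: "'a filter"
  assumes "F \<noteq> bot"
  obtains U where "ultrafilter U" "U \<le> F"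
proof -
  define E where "E = (\<lambda>G::'a filter. {P. eventually P G})"
  have E_inj: "E G = E H \<Longrightarrow> G = H" for G H
    unfolding E_def by (auto simp: filter_eq_iff)
  have le_iff_E: "G \<le> H \<longleftrightarrow> E H \<subseteq> E G" for G H
    unfolding E_def le_filter_def by auto
  define A where "A = E ` {G. G \<noteq> bot \<and> G \<le> F}"
  have "\<exists>M\<in>A. \<forall>X\<in>A. M \<subseteq> X \<longrightarrow> X = M"
  proof (rule subset_Zorn_nonempty)
    show "A \<noteq> {}" using assms unfolding A_def by blast
  next
    fix C assume "C \<noteq> {}" and chain: "subset.chain A C"
    define B where "B = {G. G \<noteq> bot \<and> G \<le> F \<and> E G \<in> C}"
    have C: "C = E ` B" using chain unfolding B_def A_def subset_chain_def by auto
    then have ev_Inf: "eventually P (Inf B) \<longleftrightarrow> (\<exists>G\<in>B. eventually P G)" for P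
      using chain \<open>C \<noteq> {}\<close> le_iff_E
      by (intro eventually_Inf_filter_chain) (auto simp: subset_chain_def)
    have "Inf B \<noteq> bot"
      using ev_Inf[of "\<lambda>_. False"] unfolding B_def by (auto simp: eventually_False)
    moreover have "Inf B \<le> F"
      using C \<open>C \<noteq> {}\<close> unfolding B_def by (auto intro: Inf_lower2)
    moreover have "\<Union>C = E (Inf B)"
      using C ev_Inf unfolding E_def by auto
    ultimately show "\<Union>C \<in> A" unfolding A_def by blast
  qed
  then obtain U where "U \<noteq> bot" "U \<le> F" and maximal: "\<And>G. G \<noteq> bot \<Longrightarrow> G \<le> F \<Longrightarrow> E U \<subseteq> E G \<Longrightarrow> E G = E U"
    unfolding A_def by auto
  have "ultrafilter U"
  proof (rule ultrafilterI_maximal[OF \<open>U \<noteq> bot\<close>])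
    fix G assume "G \<noteq> bot" "G \<le> U"
    have "E U \<subseteq> E G" using \<open>G \<le> U\<close> le_iff_E by blast
    moreover have "G \<le> F" using \<open>G \<le> U\<close> \<open>U \<le> F\<close> by (rule order_trans)
    ultimately have "E G = E U" using maximal \<open>G \<noteq> bot\<close> by blast
    then show "G = U" by (rule E_inj)
  qed
  then show ?thesis using \<open>U \<le> F\<close> that by blast
qed

lemma ultrafilter_tendsto_compact:
  fixes f :: "'a \<Rightarrow> 'b::t2_space"
  assumes U: "ultrafilter U" and "compact K" and "eventually (\<lambda>x. f x \<in> K) U"
  obtains l where "l \<in> K" "(f \<longlongrightarrow> l) U"
proof -
  have "filtermap f U \<noteq> bot"
    using U unfolding ultrafilter_def by (simp add: filtermap_bot_iff)
  moreover have "eventually (\<lambda>x. x \<in> K) (filtermap f U)"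
    using assms(3) by (simp add: eventually_filtermap)
  ultimately obtain l where l: "l \<in> K" "inf (nhds l) (filtermap f U) \<noteq> bot"
    using \<open>compact K\<close> unfolding compact_filter by blast
  have "(f \<longlongrightarrow> l) U"
  proof (rule topological_tendstoI)
    fix S assume "open S" "l \<in> S"
    show "eventually (\<lambda>x. f x \<in> S) U"
    proof (rule ccontr)
      assume "\<not> eventually (\<lambda>x. f x \<in> S) U"
      then have "eventually (\<lambda>x. f x \<notin> S) U" using U unfolding ultrafilter_def by blast
      moreover have "eventually (\<lambda>x. x \<in> S) (nhds l)" using \<open>open S\<close> \<open>l \<in> S\<close> eventually_nhds by blast
      ultimately have "eventually (\<lambda>x. False) (inf (nhds l) (filtermap f U))"
        unfolding eventually_inf by (force simp: eventually_filtermap)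
      then show False using l(2) by (simp add: eventually_False)
    qed
  qed
  then show ?thesis using l that by blast
qed

lemma closed_if_compact_Int_cball:
  fixes S :: "'v::real_normed_vector set"
  assumes "\<And>r. compact (S \<inter> cball 0 r)"
  shows "closed S"
  unfolding closed_sequential_limits
proof (intro allI impI, elim conjE)
  fix x l assume x: "\<forall>n. x n \<in> S" and lim: "x \<longlonglongrightarrow> l"
  obtain R where "\<forall>n. norm (x n) \<le> R"
    using convergent_imp_bounded[OF lim] by (meson bounded_iff rangeI)
  then have "x n \<in> S \<inter> cball 0 R" for n using x by simp
  moreover have "closed (S \<inter> cball 0 R)" using assms compact_imp_closed by blast
  ultimately have "l \<in> S \<inter> cball 0 R" using closed_sequentially lim by blast
  then show "l \<in> S" by simp
qed

lemma span_insert_coefficient_le: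
  fixes b :: "'v::real_normed_vector"
  assumes "closed (span B)" "b \<notin> span B"
  obtains d where "d > 0" "\<And>x k. x - k *\<^sub>R b \<in> span B \<Longrightarrow> d * \<bar>k\<bar> \<le> norm x"
proof -
  define d where "d = infdist b (span B)"
  have "span B \<noteq> {}" using span_zero by blast
  then have "d \<noteq> 0"
    using assms in_closure_iff_infdist_zero[of "span B" b] by (simp add: d_def closure_closed)
  then have "d > 0" using infdist_nonneg[of b "span B"] d_def by simp
  moreover have "d * \<bar>k\<bar> \<le> norm x" if "x - k *\<^sub>R b \<in> span B" for x k
  proof (cases "k = 0")
    case False
    have "(- inverse k) *\<^sub>R (x - k *\<^sub>R b) \<in> span B" using that span_mul by blast
    moreover have "(- inverse k) *\<^sub>R (x - k *\<^sub>R b) = b - inverse k *\<^sub>R x"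
      using False by (simp add: algebra_simps)
    ultimately have "d \<le> dist b (b - inverse k *\<^sub>R x)" unfolding d_def by (metis infdist_le)
    also have "\<dots> = norm x / \<bar>k\<bar>" by (simp add: dist_norm divide_inverse_commute)
    finally show ?thesis using False by (simp add: field_simps)
  qed simp
  ultimately show ?thesis using that by blast
qed

lemma span_insert_Int_cball_subset:
  fixes b :: "'v::real_normed_vector"
  assumes "d > 0" and coeff: "\<And>x k. x - k *\<^sub>R b \<in> span B \<Longrightarrow> d * \<bar>k\<bar> \<le> norm x"
  shows "span (insert b B) \<inter> cball 0 r \<subseteq>
    (\<lambda>p. fst p *\<^sub>R b + snd p) ` ({-r/d..r/d} \<times> (span B \<inter> cball 0 (r + r / d * norm b)))"
proof
  fix x assume x: "x \<in> span (insert b B) \<inter> cball 0 r"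
  then obtain k where k: "x - k *\<^sub>R b \<in> span B" using span_breakdown_eq by blast
  have "norm x \<le> r" using x by simp
  then have k_le: "\<bar>k\<bar> \<le> r / d" using coeff[OF k] \<open>d > 0\<close> by (simp add: field_simps)
  have "norm (x - k *\<^sub>R b) \<le> norm x + \<bar>k\<bar> * norm b"
    by (metis norm_scaleR norm_triangle_ineq4)
  also have "\<dots> \<le> r + r / d * norm b"
    using \<open>norm x \<le> r\<close> mult_right_mono[OF k_le norm_ge_zero[of b]] by linarith
  finally have "(k, x - k *\<^sub>R b) \<in> {-r/d..r/d} \<times> (span B \<inter> cball 0 (r + r / d * norm b))"
    using k k_le by (simp add: abs_le_iff)
  moreover have "x = fst (k, x - k *\<^sub>R b) *\<^sub>R b + snd (k, x - k *\<^sub>R b)" by simp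
  ultimately show "x \<in> (\<lambda>p. fst p *\<^sub>R b + snd p) ` ({-r/d..r/d} \<times> (span B \<inter> cball 0 (r + r / d * norm b)))"
    by (rule rev_image_eqI)
qed

lemma compact_span_Int_cball:
  fixes B :: "'v::real_normed_vector set"
  assumes "finite B"
  shows "compact (span B \<inter> cball 0 r)"
  using assms
proof (induction B arbitrary: r rule: finite_induct)
  case empty
  have "span {} \<inter> cball (0::'v) r \<subseteq> {0}" by auto
  then show ?case using finite_subset finite_imp_compact by blast
next
  case (insert b B)
  show ?case
  proof (cases "b \<in> span B")
    case True
    then show ?thesis using insert.IH by (simp add: span_redundant)
  next
    case False
    have "closed (span B)" using insert.IH by (rule closed_if_compact_Int_cball)
    then obtain d where "d > 0" and coeff: "\<And>x k. x - k *\<^sub>R b \<in> span B \<Longrightarrow> d * \<bar>k\<bar> \<le> norm x"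
      using span_insert_coefficient_le[OF _ False] by blast
    define K where "K = (\<lambda>p. fst p *\<^sub>R b + snd p) ` ({-r/d..r/d} \<times> (span B \<inter> cball 0 (r + r / d * norm b)))"
    have "compact K"
      unfolding K_def by (intro compact_continuous_image compact_Times insert.IH compact_Icc continuous_intros)
    moreover have "span (insert b B) \<inter> cball 0 r = K \<inter> cball 0 r"
    proof
      show "span (insert b B) \<inter> cball 0 r \<subseteq> K \<inter> cball 0 r"
        using span_insert_Int_cball_subset[OF \<open>d > 0\<close> coeff] unfolding K_def by blast
      show "K \<inter> cball 0 r \<subseteq> span (insert b B) \<inter> cball 0 r"
      proof
        fix x assume x: "x \<in> K \<inter> cball 0 r"
        then obtain k s where "x = k *\<^sub>R b + s" "s \<in> span B" unfolding K_def by auto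
        then have "x - k *\<^sub>R b \<in> span B" by simp
        then show "x \<in> span (insert b B) \<inter> cball 0 r" using x span_breakdown_eq by blast
      qed
    qed
    ultimately show ?thesis using compact_Int_closed[of K "cball 0 r"] by simp
  qed
qed

lemma compact_cball_finite_dim:
  fixes a :: "'v::real_normed_vector"
  assumes "\<exists>B :: 'v set. finite B \<and> span B = UNIV"
  shows "compact (cball a r)"
proof -
  obtain B :: "'v set" where "finite B" "span B = UNIV" using assms by blast
  then have "compact (cball (0::'v) (norm a + r))"
    using compact_span_Int_cball[of B] by simp
  moreover have "cball a r \<subseteq> cball (0::'v) (norm a + r)"
    by (auto simp: dist_norm) (metis add.commute norm_minus_commute norm_triangle_sub order_trans add_left_mono)
  ultimately show ?thesis using compact_Int_closed[of "cball 0 (norm a + r)" "cball a r"]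
    by (simp add: Int_absorb1)
qed

lemma ultrafilter_tendsto_Lim_finite_dim:
  fixes f :: "'a \<Rightarrow> 'v::real_normed_vector"
  assumes fd: "\<exists>B :: 'v set. finite B \<and> span B = UNIV"
    and U: "ultrafilter U" and "eventually (\<lambda>x. f x \<in> cball c r) U"
  shows "(f \<longlongrightarrow> Lim U f) U"
proof -
  obtain l where "(f \<longlongrightarrow> l) U"
    using ultrafilter_tendsto_compact[OF U compact_cball_finite_dim[OF fd] assms(3)] by blast
  moreover have "U \<noteq> bot" using U unfolding ultrafilter_def by simp
  ultimately show ?thesis using tendsto_Lim by blast
qed

section \<open>Extension from finite subsets\<close>

lemma lipschitz_ultrafilter_limit:
  fixes G :: "'i \<Rightarrow> 'z \<Rightarrow> 'v::real_normed_vector"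
  assumes fd: "\<exists>B :: 'v set. finite B \<and> span B = UNIV" and U: "ultrafilter U" and "X \<subseteq> Z"
    and bounded: "\<And>z. z \<in> Z \<Longrightarrow> \<exists>c r. eventually (\<lambda>i. G i z \<in> cball c r) U"
    and lip: "\<And>x y. x \<in> Z \<Longrightarrow> y \<in> Z \<Longrightarrow> eventually (\<lambda>i. norm (G i x - G i y) \<le> K * \<rho> x y) U"
    and agree: "\<And>x. x \<in> X \<Longrightarrow> eventually (\<lambda>i. G i x = f x) U"
  shows "\<exists>g. (\<forall>x\<in>X. g x = f x) \<and> lipschitz_wrt \<rho> K Z g"
proof -
  have "U \<noteq> bot" using U unfolding ultrafilter_def by simp
  define g where "g z = Lim U (\<lambda>i. G i z)" for z
  have G_tendsto: "((\<lambda>i. G i z) \<longlongrightarrow> g z) U" if z: "z \<in> Z" for z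
  proof -
    obtain c r where "eventually (\<lambda>i. G i z \<in> cball c r) U" using bounded[OF z] by blast
    then show ?thesis unfolding g_def by (rule ultrafilter_tendsto_Lim_finite_dim[OF fd U])
  qed
  have "g x = f x" if "x \<in> X" for x
    using tendsto_unique[OF \<open>U \<noteq> bot\<close> G_tendsto tendsto_eventually[OF agree[OF that]]] that \<open>X \<subseteq> Z\<close>
    by blast
  moreover have "norm (g x - g y) \<le> K * \<rho> x y" if "x \<in> Z" "y \<in> Z" for x y
    by (rule tendsto_upperbound[OF _ lip[OF that] \<open>U \<noteq> bot\<close>]) (intro tendsto_intros G_tendsto that)
  ultimately show ?thesis unfolding lipschitz_wrt_def by blast
qed

text \<open>Along an ultrafilter refining the net of finite subsets S of Z, the extensions to S stay at
  each z in the ball of radius K * rho z x0 around f x0.\<close>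
lemma lipschitz_extension_from_finite_subsets:
  fixes f :: "'z \<Rightarrow> 'v::real_normed_vector"
  assumes fd: "\<exists>B :: 'v set. finite B \<and> span B = UNIV"
    and M: "Metric_space Z \<rho>" and "X \<subseteq> Z" "0 \<le> K"
    and finite_ext: "\<And>S. finite S \<Longrightarrow> S \<subseteq> Z \<Longrightarrow> \<exists>g. (\<forall>x\<in>X \<inter> S. g x = f x) \<and> lipschitz_wrt \<rho> K S g"
  shows "\<exists>g. (\<forall>x\<in>X. g x = f x) \<and> lipschitz_wrt \<rho> K Z g"
proof (cases "X = {}")
  case True
  then show ?thesis
    using Metric_space.nonneg[OF M] \<open>0 \<le> K\<close> unfolding lipschitz_wrt_def by (intro exI[of _ "\<lambda>_. 0"]) simp
next
  case False
  then obtain x0 where "x0 \<in> X" by blast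
  define G where "G = (\<lambda>S. SOME g. (\<forall>x\<in>X \<inter> S. g x = f x) \<and> lipschitz_wrt \<rho> K S g)"
  have G: "(\<forall>x\<in>X \<inter> S. G S x = f x) \<and> lipschitz_wrt \<rho> K S (G S)" if "finite S" "S \<subseteq> Z" for S
    unfolding G_def using finite_ext[OF that] by (rule someI_ex)
  obtain U where U: "ultrafilter U" "U \<le> finite_subsets_at_top Z"
    using ultrafilter_finer_exists[OF finite_subsets_at_top_neq_bot] by blast
  have eventually_G: "eventually (\<lambda>S. (\<forall>x\<in>X \<inter> S. G S x = f x) \<and> lipschitz_wrt \<rho> K S (G S) \<and> A \<subseteq> S) U"
    if "finite A" "A \<subseteq> Z" for A
  proof -
    have "eventually (\<lambda>S. finite S \<and> S \<subseteq> Z \<and> A \<subseteq> S) (finite_subsets_at_top Z)"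
      unfolding eventually_finite_subsets_at_top using that by blast
    then have "eventually (\<lambda>S. finite S \<and> S \<subseteq> Z \<and> A \<subseteq> S) U"
      using U(2) by (simp add: le_filter_def)
    then show ?thesis
      by (rule eventually_mono) (use G in blast)
  qed
  show ?thesis
  proof (rule lipschitz_ultrafilter_limit[OF fd U(1) \<open>X \<subseteq> Z\<close>])
    fix z assume "z \<in> Z"
    have "eventually (\<lambda>S. G S z \<in> cball (f x0) (K * \<rho> z x0)) U"
    proof (rule eventually_mono[OF eventually_G[of "{z, x0}"]])
      fix S assume S: "(\<forall>x\<in>X \<inter> S. G S x = f x) \<and> lipschitz_wrt \<rho> K S (G S) \<and> {z, x0} \<subseteq> S"
      then have "G S x0 = f x0" using \<open>x0 \<in> X\<close> by blast
      moreover have "norm (G S z - G S x0) \<le> K * \<rho> z x0" using S unfolding lipschitz_wrt_def by blast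
      ultimately show "G S z \<in> cball (f x0) (K * \<rho> z x0)" by (simp add: dist_norm norm_minus_commute)
    qed (use \<open>z \<in> Z\<close> \<open>x0 \<in> X\<close> \<open>X \<subseteq> Z\<close> in auto)
    then show "\<exists>c r. eventually (\<lambda>S. G S z \<in> cball c r) U" by blast
  next
    show "eventually (\<lambda>S. norm (G S x - G S y) \<le> K * \<rho> x y) U" if "x \<in> Z" "y \<in> Z" for x y
      by (rule eventually_mono[OF eventually_G[of "{x, y}"]]) (use that in \<open>auto simp: lipschitz_wrt_def\<close>)
  next
    show "eventually (\<lambda>S. G S x = f x) U" if "x \<in> X" for x
      by (rule eventually_mono[OF eventually_G[of "{x}"]]) (use that \<open>X \<subseteq> Z\<close> in auto)
  qed
qed

lemma lipschitz_extendable_finite_imp_all: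
  fixes V :: "'v::real_normed_vector itself" and P :: "'z set \<Rightarrow> ('z \<Rightarrow> 'z \<Rightarrow> real) \<Rightarrow> bool"
  assumes fd: "\<exists>B :: 'v set. finite B \<and> span B = UNIV"
    and ext: "lipschitz_extendable (\<lambda>(Z::nat set) \<rho>. finite Z) c V" and "0 \<le> c"
  shows "lipschitz_extendable P c V"
proof (rule lipschitz_extendableI)
  fix Z \<rho> X L and f :: "'z \<Rightarrow> 'v"
  assume M: "Metric_space Z \<rho>" and "X \<subseteq> Z" "0 \<le> L" and f: "lipschitz_wrt \<rho> L X f"
  have "\<exists>g. (\<forall>x\<in>X \<inter> S. g x = f x) \<and> lipschitz_wrt \<rho> (c * L) S g" if "finite S" "S \<subseteq> Z" for S
    using lipschitz_extendableD[OF lipschitz_extendable_finite_nat_imp_finite[OF ext]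
        Metric_space.subspace[OF M \<open>S \<subseteq> Z\<close>] _ _ \<open>0 \<le> L\<close> lipschitz_wrt_subset[OF f]] that
    by auto
  then show "\<exists>g. (\<forall>x\<in>X. g x = f x) \<and> lipschitz_wrt \<rho> (c * L) Z g"
    using lipschitz_extension_from_finite_subsets[OF fd M \<open>X \<subseteq> Z\<close>] \<open>0 \<le> c\<close> \<open>0 \<le> L\<close> by simp
qed

section \<open>An invariant mean\<close>

text \<open>grid_average [s1, ..., sn] N h is the average of h over the grid of the points
  j1 s1 + ... + jn sn with 0 \<le> ji < N.\<close>
fun grid_average :: "'a::real_vector list \<Rightarrow> nat \<Rightarrow> ('a \<Rightarrow> 'b::real_normed_vector) \<Rightarrow> 'b" where
  "grid_average [] N h = h 0"
| "grid_average (s # ss) N h = (1 / real N) *\<^sub>R (\<Sum>j<N. grid_average ss N (\<lambda>x. h (x + real j *\<^sub>R s)))"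

lemma grid_average_add: "grid_average ss N (\<lambda>x. h1 x + h2 x) = grid_average ss N h1 + grid_average ss N h2"
  by (induction ss arbitrary: h1 h2) (simp_all add: sum.distrib scaleR_add_right)

lemma grid_average_diff: "grid_average ss N (\<lambda>x. h1 x - h2 x) = grid_average ss N h1 - grid_average ss N h2"
  by (induction ss arbitrary: h1 h2) (simp_all add: sum_subtractf scaleR_diff_right)

lemma grid_average_const: "N > 0 \<Longrightarrow> grid_average ss N (\<lambda>_. c) = c"
  by (induction ss) (simp_all add: sum_constant_scaleR)

lemma norm_grid_average_le:
  assumes "N > 0" "\<And>x. norm (h x) \<le> B"
  shows "norm (grid_average ss N h) \<le> B"
  using assms(2)
proof (induction ss arbitrary: h)
  case (Cons s ss)
  have "norm (\<Sum>j<N. grid_average ss N (\<lambda>x. h (x + real j *\<^sub>R s))) \<le> (\<Sum>j<N. B)"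
    by (rule order_trans[OF norm_sum sum_mono]) (use Cons in auto)
  then show ?case using \<open>N > 0\<close> by (simp add: field_simps)
qed simp

text \<open>In the direction s the shifted and unshifted sums telescope to their end terms.\<close>
lemma grid_average_shift_head:
  assumes N: "N > 0" and hB: "\<And>x. norm (h x) \<le> B"
  shows "norm (grid_average (s # ss) N (\<lambda>x. h (x + s)) - grid_average (s # ss) N h) \<le> 2 * B / real N"
proof -
  define F where "F = (\<lambda>j::nat. grid_average ss N (\<lambda>x. h (x + real j *\<^sub>R s)))"
  have "(\<lambda>x. h (x + real j *\<^sub>R s + s)) = (\<lambda>x. h (x + real (Suc j) *\<^sub>R s))" for j
    by (simp add: algebra_simps)
  then have "grid_average (s # ss) N (\<lambda>x. h (x + s)) - grid_average (s # ss) N h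
      = (1 / real N) *\<^sub>R ((\<Sum>j<N. F (Suc j)) - (\<Sum>j<N. F j))"
    by (simp add: F_def scaleR_diff_right)
  also have "\<dots> = (1 / real N) *\<^sub>R (F N - F 0)"
    by (simp only: sum_lessThan_telescope flip: sum_subtractf)
  finally have "norm (grid_average (s # ss) N (\<lambda>x. h (x + s)) - grid_average (s # ss) N h)
      = norm (F N - F 0) / real N"
    by simp
  moreover have "norm (F N) \<le> B" "norm (F 0) \<le> B"
    unfolding F_def using hB by (simp_all add: norm_grid_average_le[OF N])
  then have "norm (F N - F 0) \<le> 2 * B"
    using norm_triangle_ineq4[of "F N" "F 0"] by simp
  ultimately show ?thesis using N by (simp add: divide_right_mono)
qed

lemma grid_average_shift:
  assumes N: "N > 0" and hB: "\<And>x. norm (h x) \<le> B" and "y \<in> set ss"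
  shows "norm (grid_average ss N (\<lambda>x. h (x + y)) - grid_average ss N h) \<le> 2 * B / real N"
  using hB \<open>y \<in> set ss\<close>
proof (induction ss arbitrary: h)
  case (Cons s ss)
  show ?case
  proof (cases "y = s")
    case True
    then show ?thesis using grid_average_shift_head[OF N Cons.prems(1)] by simp
  next
    case False
    then have "y \<in> set ss" using Cons.prems(2) by simp
    define F where "F = (\<lambda>j::nat. grid_average ss N (\<lambda>x. h (x + real j *\<^sub>R s)))"
    define F' where "F' = (\<lambda>j::nat. grid_average ss N (\<lambda>x. h (x + real j *\<^sub>R s + y)))"
    have "norm (F' j - F j) \<le> 2 * B / real N" for j
    proof -
      have "(\<lambda>x. h (x + real j *\<^sub>R s + y)) = (\<lambda>x. (\<lambda>z. h (z + real j *\<^sub>R s)) (x + y))"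
        by (simp add: add_ac)
      then show ?thesis
        using Cons.IH[of "\<lambda>z. h (z + real j *\<^sub>R s)"] Cons.prems(1) \<open>y \<in> set ss\<close>
        unfolding F_def F'_def by simp
    qed
    then have "norm (\<Sum>j<N. F' j - F j) \<le> (\<Sum>j<N. 2 * B / real N)"
      by (intro order_trans[OF norm_sum sum_mono])
    moreover have "grid_average (s # ss) N (\<lambda>x. h (x + y)) - grid_average (s # ss) N h
        = (1 / real N) *\<^sub>R (\<Sum>j<N. F' j - F j)"
      by (simp add: F_def F'_def sum_subtractf scaleR_diff_right)
    ultimately show ?thesis using N by (simp add: field_simps)
  qed
qed simp

text \<open>The averaging net is indexed by a finite set S of directions and a grid size N; along it S
  eventually contains every vector and N tends to infinity.\<close>
definition mean_ultrafilter :: "('a set \<times> nat) filter" where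
  "mean_ultrafilter = (SOME U. ultrafilter U \<and> U \<le> finite_subsets_at_top UNIV \<times>\<^sub>F sequentially)"

lemma mean_ultrafilter:
  "ultrafilter (mean_ultrafilter :: ('a set \<times> nat) filter)"
  "(mean_ultrafilter :: ('a set \<times> nat) filter) \<le> finite_subsets_at_top UNIV \<times>\<^sub>F sequentially"
proof -
  have "finite_subsets_at_top (UNIV :: 'a set) \<times>\<^sub>F sequentially \<noteq> (bot :: ('a set \<times> nat) filter)"
    by (simp add: prod_filter_eq_bot)
  then obtain U :: "('a set \<times> nat) filter"
    where "ultrafilter U" "U \<le> finite_subsets_at_top UNIV \<times>\<^sub>F sequentially"
    by (rule ultrafilter_finer_exists)
  then have "\<exists>U. ultrafilter U \<and> U \<le> finite_subsets_at_top (UNIV :: 'a set) \<times>\<^sub>F sequentially"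
    by blast
  from someI_ex[OF this] show "ultrafilter (mean_ultrafilter :: ('a set \<times> nat) filter)"
    "(mean_ultrafilter :: ('a set \<times> nat) filter) \<le> finite_subsets_at_top UNIV \<times>\<^sub>F sequentially"
    unfolding mean_ultrafilter_def by auto
qed

lemma mean_ultrafilter_neq_bot: "(mean_ultrafilter :: ('a set \<times> nat) filter) \<noteq> bot"
  using mean_ultrafilter(1)[where 'a='a] unfolding ultrafilter_def by simp

lemma eventually_mean_ultrafilter:
  assumes "finite A"
  shows "eventually (\<lambda>p. finite (fst p) \<and> A \<subseteq> fst p \<and> N0 \<le> snd p) mean_ultrafilter"
proof -
  have "eventually (\<lambda>p. finite (fst p) \<and> A \<subseteq> fst p \<and> N0 \<le> snd p)
      (finite_subsets_at_top UNIV \<times>\<^sub>F sequentially)"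
    unfolding eventually_prod_filter
  proof (intro exI conjI)
    show "eventually (\<lambda>S. finite S \<and> A \<subseteq> S) (finite_subsets_at_top UNIV)"
      unfolding eventually_finite_subsets_at_top using assms by blast
  qed (auto intro: eventually_ge_at_top)
  then show ?thesis using mean_ultrafilter(2) le_filter_def by blast
qed

definition set_to_list :: "'a set \<Rightarrow> 'a list" where
  "set_to_list S = (SOME l. set l = S)"

lemma set_set_to_list: "finite S \<Longrightarrow> set (set_to_list S) = S"
  unfolding set_to_list_def by (rule someI_ex) (rule finite_list)

definition grid_average_net :: "('a::real_vector \<Rightarrow> 'b::real_normed_vector) \<Rightarrow> 'a set \<times> nat \<Rightarrow> 'b" where
  "grid_average_net h = (\<lambda>p. grid_average (set_to_list (fst p)) (snd p) h)"

definition invariant_mean :: "('a::real_vector \<Rightarrow> 'b::real_normed_vector) \<Rightarrow> 'b" where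
  "invariant_mean h = Lim mean_ultrafilter (grid_average_net h)"

lemma eventually_grid_size_pos: "eventually (\<lambda>p. 0 < snd p) mean_ultrafilter"
  using eventually_mean_ultrafilter[of "{}" 1] by (auto elim: eventually_mono)

lemma norm_grid_average_net_le:
  "(\<And>x. norm (h x) \<le> B) \<Longrightarrow> eventually (\<lambda>p. norm (grid_average_net h p) \<le> B) mean_ultrafilter"
  using eventually_grid_size_pos by eventually_elim (simp add: grid_average_net_def norm_grid_average_le)

lemma invariant_mean_tendsto:
  fixes h :: "'a::real_vector \<Rightarrow> 'b::real_normed_vector"
  assumes fd: "\<exists>B :: 'b set. finite B \<and> span B = UNIV" and hB: "\<And>x. norm (h x) \<le> B"
  shows "(grid_average_net h \<longlongrightarrow> invariant_mean h) mean_ultrafilter"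
proof -
  have "eventually (\<lambda>p. grid_average_net h p \<in> cball 0 B) mean_ultrafilter"
    using norm_grid_average_net_le[OF hB] by simp
  then show ?thesis
    unfolding invariant_mean_def by (rule ultrafilter_tendsto_Lim_finite_dim[OF fd mean_ultrafilter(1)])
qed

lemma invariant_mean_eqI:
  "(grid_average_net h \<longlongrightarrow> l) mean_ultrafilter \<Longrightarrow> invariant_mean h = l"
  unfolding invariant_mean_def using tendsto_Lim mean_ultrafilter_neq_bot by metis

lemma invariant_mean_add:
  fixes h1 h2 :: "'a::real_vector \<Rightarrow> 'b::real_normed_vector"
  assumes fd: "\<exists>B :: 'b set. finite B \<and> span B = UNIV"
    and "\<And>x. norm (h1 x) \<le> B" "\<And>x. norm (h2 x) \<le> B'"
  shows "invariant_mean (\<lambda>x. h1 x + h2 x) = invariant_mean h1 + invariant_mean h2"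
proof (rule invariant_mean_eqI)
  have "(grid_average_net h1 \<longlongrightarrow> invariant_mean h1) mean_ultrafilter"
    "(grid_average_net h2 \<longlongrightarrow> invariant_mean h2) mean_ultrafilter"
    by (rule invariant_mean_tendsto[OF fd], rule assms)+
  from tendsto_add[OF this]
  show "(grid_average_net (\<lambda>x. h1 x + h2 x) \<longlongrightarrow> invariant_mean h1 + invariant_mean h2) mean_ultrafilter"
    by (simp add: grid_average_net_def grid_average_add)
qed

lemma invariant_mean_diff:
  fixes h1 h2 :: "'a::real_vector \<Rightarrow> 'b::real_normed_vector"
  assumes fd: "\<exists>B :: 'b set. finite B \<and> span B = UNIV"
    and "\<And>x. norm (h1 x) \<le> B" "\<And>x. norm (h2 x) \<le> B'"
  shows "invariant_mean (\<lambda>x. h1 x - h2 x) = invariant_mean h1 - invariant_mean h2"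
proof (rule invariant_mean_eqI)
  have "(grid_average_net h1 \<longlongrightarrow> invariant_mean h1) mean_ultrafilter"
    "(grid_average_net h2 \<longlongrightarrow> invariant_mean h2) mean_ultrafilter"
    by (rule invariant_mean_tendsto[OF fd], rule assms)+
  from tendsto_diff[OF this]
  show "(grid_average_net (\<lambda>x. h1 x - h2 x) \<longlongrightarrow> invariant_mean h1 - invariant_mean h2) mean_ultrafilter"
    by (simp add: grid_average_net_def grid_average_diff)
qed

lemma invariant_mean_const: "invariant_mean (\<lambda>_::'a::real_vector. c) = (c::'b::real_normed_vector)"
proof (rule invariant_mean_eqI)
  have "eventually (\<lambda>p. c = grid_average_net (\<lambda>_::'a. c) p) mean_ultrafilter"
    using eventually_grid_size_pos by eventually_elim (simp add: grid_average_net_def grid_average_const)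
  then show "(grid_average_net (\<lambda>_::'a. c) \<longlongrightarrow> c) mean_ultrafilter"
    by (rule Lim_transform_eventually[OF tendsto_const])
qed

lemma norm_invariant_mean_le:
  fixes h :: "'a::real_vector \<Rightarrow> 'b::real_normed_vector"
  assumes fd: "\<exists>B :: 'b set. finite B \<and> span B = UNIV" and hB: "\<And>x. norm (h x) \<le> B"
  shows "norm (invariant_mean h) \<le> B"
  using tendsto_norm[OF invariant_mean_tendsto[OF fd hB]] norm_grid_average_net_le[OF hB]
  by (rule tendsto_upperbound[OF _ _ mean_ultrafilter_neq_bot])

lemma invariant_mean_shift:
  fixes h :: "'a::real_vector \<Rightarrow> 'b::real_normed_vector"
  assumes fd: "\<exists>B :: 'b set. finite B \<and> span B = UNIV" and hB: "\<And>x. norm (h x) \<le> B"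
  shows "invariant_mean (\<lambda>x. h (x + y)) = invariant_mean h"
proof -
  let ?d = "\<lambda>p. grid_average_net (\<lambda>x. h (x + y)) p - grid_average_net h p"
  have "(?d \<longlongrightarrow> invariant_mean (\<lambda>x. h (x + y)) - invariant_mean h) mean_ultrafilter"
    using hB by (intro tendsto_diff invariant_mean_tendsto[OF fd]) auto
  moreover have "(?d \<longlongrightarrow> 0) mean_ultrafilter"
  proof (rule Lim_null_comparison)
    have "eventually (\<lambda>p. finite (fst p) \<and> {y} \<subseteq> fst p \<and> 1 \<le> snd p) mean_ultrafilter"
      by (rule eventually_mean_ultrafilter) simp
    then show "eventually (\<lambda>p. norm (?d p) \<le> 2 * B / real (snd p)) mean_ultrafilter"
      by eventually_elim (simp add: grid_average_net_def set_set_to_list grid_average_shift hB)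
    have "((\<lambda>N. 2 * B / real N) \<longlongrightarrow> 0) sequentially"
      by (rule lim_const_over_n)
    moreover have "filterlim snd sequentially mean_ultrafilter"
      using filterlim_snd mean_ultrafilter(2) filterlim_mono by blast
    ultimately show "((\<lambda>p. 2 * B / real (snd p)) \<longlongrightarrow> 0) mean_ultrafilter"
      by (rule filterlim_compose)
  qed
  ultimately have "invariant_mean (\<lambda>x. h (x + y)) - invariant_mean h = 0"
    by (rule tendsto_unique[OF mean_ultrafilter_neq_bot])
  then show ?thesis by simp
qed

section \<open>Projections from Lipschitz retractions\<close>

lemma additive_bounded_imp_linear:
  fixes f :: "'a::real_normed_vector \<Rightarrow> 'b::real_normed_vector"
  assumes add: "\<And>x y. f (x + y) = f x + f y" and bounded: "\<And>x. norm (f x) \<le> C * norm x" and "0 \<le> C"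
  shows "linear f"
proof -
  interpret additive f by unfold_locales (rule add)
  have scale_of_nat: "f (of_nat n *\<^sub>R x) = of_nat n *\<^sub>R f x" for n x
    by (induction n) (simp_all add: zero add scaleR_add_left)
  have scale_of_int: "f (of_int k *\<^sub>R x) = of_int k *\<^sub>R f x" for k x
    by (cases k rule: int_cases2) (simp_all add: scale_of_nat minus)
  have scale_rat: "f (r *\<^sub>R x) = r *\<^sub>R f x" if "r \<in> \<rat>" for r x
  proof -
    obtain k b :: int where "b > 0" and r: "r = of_int k / of_int b"
      using \<open>r \<in> \<rat>\<close> Rats_cases' by metis
    have "of_int b *\<^sub>R f (r *\<^sub>R x) = f (of_int k *\<^sub>R x)"
      using scale_of_int[of b "r *\<^sub>R x"] \<open>b > 0\<close> r by simp
    also have "\<dots> = of_int b *\<^sub>R (r *\<^sub>R f x)"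
      using scale_of_int[of k x] \<open>b > 0\<close> r by simp
    finally show ?thesis
      using \<open>b > 0\<close> by (simp only: scaleR_cancel_left) simp
  qed
  have "dist (f x) (f y) \<le> C * dist x y" for x y
    using bounded[of "x - y"] by (simp add: dist_norm diff)
  then have "C-lipschitz_on UNIV f"
    using \<open>0 \<le> C\<close> by (intro lipschitz_onI)
  then have "continuous_on UNIV f" by (rule lipschitz_on_continuous_on)
  have "f (r *\<^sub>R x) - r *\<^sub>R f x = 0" for r x
  proof (rule continuous_constant_on_closure[where S = \<rat>])
    have "continuous_on UNIV (\<lambda>r. f (r *\<^sub>R x))"
      by (rule continuous_on_compose2[OF \<open>continuous_on UNIV f\<close>]) (auto intro: continuous_intros)
    then show "continuous_on (closure \<rat>) (\<lambda>r. f (r *\<^sub>R x) - r *\<^sub>R f x)"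
      by (intro continuous_intros) (simp add: Rats_closure_real)
  qed (auto simp: scale_rat Rats_closure_real)
  then show ?thesis by (intro linearI) (simp_all add: add)
qed

text \<open>Take g' y to be the invariant mean of u \<mapsto> g (y + T u) - u.\<close>
lemma equivariant_lipschitz_left_inverse:
  fixes T :: "'v::real_normed_vector \<Rightarrow> 'w::real_normed_vector" and g :: "'w \<Rightarrow> 'v"
  assumes fd: "\<exists>B :: 'v set. finite B \<and> span B = UNIV" and "linear T"
    and g_lip: "\<And>x y. norm (g x - g y) \<le> c * norm (x - y)" and g_T: "\<And>u. g (T u) = u"
  obtains g' where "\<And>y u. g' (y + T u) = g' y + u" "\<And>x y. norm (g' x - g' y) \<le> c * norm (x - y)"
proof
  define g' where "g' = (\<lambda>y. invariant_mean (\<lambda>u. g (y + T u) - u))"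
  have bounded: "norm (g (y + T u) - u) \<le> c * norm y" for y u
    using g_lip[of "y + T u" "T u"] g_T[of u] by simp
  have g'_eq: "g' y = invariant_mean (\<lambda>u. g (y + T u) - u)" for y
    by (simp add: g'_def)
  show "g' (y + T u) = g' y + u" for y u
  proof -
    define h where "h = (\<lambda>v. g (y + T v) - v)"
    have eq: "(\<lambda>v. g (y + T u + T v) - v) = (\<lambda>v. h (v + u) + u)"
      using \<open>linear T\<close> by (simp add: h_def linear_add algebra_simps)
    have h_bounded: "norm (h (v + u)) \<le> c * norm y" for v
      unfolding h_def by (rule bounded)
    have "g' (y + T u) = invariant_mean (\<lambda>v. h (v + u) + u)"
      by (simp only: g'_eq eq)
    also have "\<dots> = invariant_mean (\<lambda>v. h (v + u)) + invariant_mean (\<lambda>_::'v. u)"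
      by (rule invariant_mean_add[OF fd h_bounded order_refl])
    also have "invariant_mean (\<lambda>v. h (v + u)) = g' y"
      unfolding g'_eq h_def by (rule invariant_mean_shift[OF fd bounded])
    finally show ?thesis by (simp add: invariant_mean_const)
  qed
  show "norm (g' x - g' y) \<le> c * norm (x - y)" for x y
  proof -
    have "g' x - g' y = invariant_mean (\<lambda>u. (g (x + T u) - u) - (g (y + T u) - u))"
      unfolding g'_eq using bounded by (intro invariant_mean_diff[OF fd, symmetric])
    also have "norm \<dots> \<le> c * norm (x - y)"
    proof (rule norm_invariant_mean_le[OF fd])
      show "norm ((g (x + T u) - u) - (g (y + T u) - u)) \<le> c * norm (x - y)" for u
        using g_lip[of "x + T u" "y + T u"] by simp
    qed
    finally show ?thesis .
  qed
qed

text \<open>Take Q w to be the invariant mean of z \<mapsto> g (z + w) - g z: translation invariance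
  makes it additive, and an additive bounded map is linear.\<close>
lemma linear_left_inverse_of_equivariant:
  fixes T :: "'v::real_normed_vector \<Rightarrow> 'w::real_normed_vector" and g :: "'w \<Rightarrow> 'v"
  assumes fd: "\<exists>B :: 'v set. finite B \<and> span B = UNIV" and "0 \<le> c"
    and g_equiv: "\<And>y u. g (y + T u) = g y + u" and g_lip: "\<And>x y. norm (g x - g y) \<le> c * norm (x - y)"
  obtains Q where "linear Q" "\<And>w. norm (Q w) \<le> c * norm w" "\<And>u. Q (T u) = u"
proof
  define Q where "Q = (\<lambda>w. invariant_mean (\<lambda>z. g (z + w) - g z))"
  have bounded: "norm (g (z + w) - g z) \<le> c * norm w" for z w
    using g_lip[of "z + w" z] by simp
  show norm_Q: "norm (Q w) \<le> c * norm w" for w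
    unfolding Q_def using bounded by (rule norm_invariant_mean_le[OF fd])
  have Q_eq: "Q w = invariant_mean (\<lambda>z. g (z + w) - g z)" for w
    by (simp add: Q_def)
  have "Q (w1 + w2) = Q w1 + Q w2" for w1 w2
  proof -
    define h where "h = (\<lambda>z. g (z + w2) - g z)"
    have "(\<lambda>z. g (z + (w1 + w2)) - g z) = (\<lambda>z. h (z + w1) + (g (z + w1) - g z))"
      by (simp add: h_def algebra_simps)
    then have "Q (w1 + w2) = invariant_mean (\<lambda>z. h (z + w1) + (g (z + w1) - g z))"
      by (simp only: Q_eq)
    also have "\<dots> = invariant_mean (\<lambda>z. h (z + w1)) + Q w1"
      unfolding Q_eq by (rule invariant_mean_add[OF fd]) (use bounded in \<open>simp_all add: h_def\<close>)
    also have "invariant_mean (\<lambda>z. h (z + w1)) = Q w2"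
      unfolding Q_eq h_def using bounded by (rule invariant_mean_shift[OF fd])
    finally show ?thesis by simp
  qed
  then show "linear Q"
    using norm_Q \<open>0 \<le> c\<close> by (rule additive_bounded_imp_linear)
  show "Q (T u) = u" for u
    unfolding Q_def g_equiv by (simp add: invariant_mean_const)
qed

lemma linear_isometry_inj:
  assumes "linear T" "\<And>v. norm (T v) = norm v"
  shows "inj T"
  using assms by (metis linear_inj_iff_eq_0 norm_eq_zero)

lemma PC_admissible_if_lipschitz_extendable:
  fixes V :: "'v::real_normed_vector itself" and W :: "'w::real_normed_vector itself"
  assumes fd: "\<exists>B :: 'v set. finite B \<and> span B = UNIV"
    and ext: "lipschitz_extendable (\<lambda>(Z::'w set) \<rho>. True) c V" and "0 \<le> c"
  shows "PC_admissible W c V"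
  unfolding PC_admissible_def
proof (intro allI impI, elim conjE)
  fix T :: "'v \<Rightarrow> 'w"
  assume "linear T" and iso: "\<forall>v. norm (T v) = norm v"
  then have "inj T" by (simp add: linear_isometry_inj)
  have M: "Metric_space (UNIV :: 'w set) dist"
    by unfold_locales (auto simp: dist_commute intro: dist_triangle)
  have inv_lip: "lipschitz_wrt dist 1 (range T) (inv T)"
    unfolding lipschitz_wrt_def
  proof clarify
    fix u v
    show "norm (inv T (T u) - inv T (T v)) \<le> 1 * dist (T u) (T v)"
      using \<open>inj T\<close> iso[rule_format, of "u - v"] linear_diff[OF \<open>linear T\<close>, of u v] by (simp add: dist_norm)
  qed
  then obtain g :: "'w \<Rightarrow> 'v" where g_T: "\<forall>x\<in>range T. g x = inv T x" and "lipschitz_wrt dist c UNIV g"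
    using lipschitz_extendableD[OF ext M _ subset_UNIV zero_le_one inv_lip] by auto
  then have "norm (g x - g y) \<le> c * norm (x - y)" for x y
    unfolding lipschitz_wrt_def by (simp add: dist_norm)
  moreover have "g (T u) = u" for u
    using g_T \<open>inj T\<close> by simp
  ultimately obtain g' where "\<And>y u. g' (y + T u) = g' y + u" "\<And>x y. norm (g' x - g' y) \<le> c * norm (x - y)"
    using equivariant_lipschitz_left_inverse[OF fd \<open>linear T\<close>] by blast
  then obtain Q where "linear Q" and norm_Q: "\<And>w. norm (Q w) \<le> c * norm w" and Q_T: "\<And>u. Q (T u) = u"
    using linear_left_inverse_of_equivariant[OF fd \<open>0 \<le> c\<close>] by blast
  have "linear (T \<circ> Q)" using \<open>linear Q\<close> \<open>linear T\<close> by (rule linear_compose)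
  moreover have "range (T \<circ> Q) = range T"
  proof
    show "range T \<subseteq> range (T \<circ> Q)" using Q_T by (metis comp_apply image_subset_iff rangeI)
  qed auto
  moreover have "\<forall>w. (T \<circ> Q) ((T \<circ> Q) w) = (T \<circ> Q) w" using Q_T by simp
  moreover have "\<forall>w. norm ((T \<circ> Q) w) \<le> c * norm w" using iso norm_Q by simp
  ultimately show "\<exists>P. linear P \<and> range P = range T \<and> (\<forall>w. P (P w) = P w) \<and> (\<forall>w. norm (P w) \<le> c * norm w)"
    by blast
qed

section \<open>Finite-dimensional Hahn-Banach theorem\<close>

definition linear_on :: "'v::real_vector set \<Rightarrow> ('v \<Rightarrow> real) \<Rightarrow> bool" where
  "linear_on M \<psi> \<longleftrightarrow> (\<forall>x\<in>M. \<forall>y\<in>M. \<psi> (x + y) = \<psi> x + \<psi> y) \<and> (\<forall>x\<in>M. \<forall>a. \<psi> (a *\<^sub>R x) = a * \<psi> x)"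

lemma hahn_banach_sup_le_inf:
  fixes M :: "'v::real_normed_vector set"
  assumes "subspace M" and lin: "linear_on M \<psi>" and dom: "\<forall>m\<in>M. \<psi> m \<le> norm m"
  obtains \<alpha> where "\<And>m. m \<in> M \<Longrightarrow> \<psi> m - norm (m - u) \<le> \<alpha>" "\<And>m. m \<in> M \<Longrightarrow> \<alpha> \<le> norm (m + u) - \<psi> m"
proof -
  have key: "\<psi> m1 - norm (m1 - u) \<le> norm (m2 + u) - \<psi> m2" if "m1 \<in> M" "m2 \<in> M" for m1 m2
  proof -
    have "\<psi> m1 + \<psi> m2 = \<psi> (m1 + m2)" using lin that unfolding linear_on_def by simp
    also have "\<dots> \<le> norm ((m1 - u) + (m2 + u))" using dom \<open>subspace M\<close> that by (simp add: subspace_add)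
    also have "\<dots> \<le> norm (m1 - u) + norm (m2 + u)" by (rule norm_triangle_ineq)
    finally show ?thesis by simp
  qed
  have "0 \<in> M" using \<open>subspace M\<close> by (simp add: subspace_0)
  show ?thesis
  proof
    show "\<psi> m - norm (m - u) \<le> (SUP m\<in>M. \<psi> m - norm (m - u))" if "m \<in> M" for m
      using that key[OF _ \<open>0 \<in> M\<close>] by (intro cSUP_upper bdd_aboveI2) auto
    show "(SUP m\<in>M. \<psi> m - norm (m - u)) \<le> norm (m + u) - \<psi> m" if "m \<in> M" for m
      using \<open>0 \<in> M\<close> key[OF _ that] by (intro cSUP_least) auto
  qed
qed

lemma hahn_banach_gap:
  fixes M :: "'v::real_normed_vector set"
  assumes "subspace M" and lin: "linear_on M \<psi>" and dom: "\<forall>m\<in>M. \<psi> m \<le> norm m"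
  obtains \<alpha> where "\<And>m t. m \<in> M \<Longrightarrow> \<psi> m + t * \<alpha> \<le> norm (m + t *\<^sub>R u)"
proof -
  obtain \<alpha> where lower: "\<And>m. m \<in> M \<Longrightarrow> \<psi> m - norm (m - u) \<le> \<alpha>"
    and upper: "\<And>m. m \<in> M \<Longrightarrow> \<alpha> \<le> norm (m + u) - \<psi> m"
    using hahn_banach_sup_le_inf[OF assms] by blast
  have \<psi>_scale: "\<psi> (a *\<^sub>R m) = a * \<psi> m" if "m \<in> M" for m a
    using lin that unfolding linear_on_def by blast
  have "\<psi> m + t * \<alpha> \<le> norm (m + t *\<^sub>R u)" if "m \<in> M" for m t
  proof -
    consider "t = 0" | "t > 0" | "t < 0" by linarith
    then show ?thesis
    proof cases
      case 1
      then show ?thesis using dom that by simp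
    next
      case 2
      have "(1 / t) *\<^sub>R m + u = (1 / t) *\<^sub>R (m + t *\<^sub>R u)" using 2 by (simp add: algebra_simps)
      moreover have "\<alpha> \<le> norm ((1 / t) *\<^sub>R m + u) - \<psi> ((1 / t) *\<^sub>R m)"
        by (rule upper[OF subspace_scale[OF \<open>subspace M\<close> that]])
      ultimately have "\<alpha> \<le> norm (m + t *\<^sub>R u) / t - \<psi> m / t"
        using 2 \<psi>_scale[OF that, of "1 / t"] by simp
      then show ?thesis using 2 by (simp add: field_simps)
    next
      case 3
      have "(1 / - t) *\<^sub>R m - u = (1 / - t) *\<^sub>R (m + t *\<^sub>R u)" using 3 by (simp add: algebra_simps)
      moreover have "\<psi> ((1 / - t) *\<^sub>R m) - norm ((1 / - t) *\<^sub>R m - u) \<le> \<alpha>"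
        by (rule lower[OF subspace_scale[OF \<open>subspace M\<close> that]])
      ultimately have "\<psi> m / - t - norm (m + t *\<^sub>R u) / - t \<le> \<alpha>"
        using 3 \<psi>_scale[OF that, of "1 / - t"] by simp
      then show ?thesis using 3 by (simp add: field_simps)
    qed
  qed
  then show ?thesis using that by blast
qed

lemma span_insert_coordinate:
  fixes M :: "'v::real_vector set"
  assumes "subspace M" "u \<notin> M"
  obtains \<tau> where "\<And>x. x \<in> span (insert u M) \<Longrightarrow> x - \<tau> x *\<^sub>R u \<in> M"
    and "\<And>x t. x - t *\<^sub>R u \<in> M \<Longrightarrow> \<tau> x = t"
proof
  have unique: "t1 = t2" if "x - t1 *\<^sub>R u \<in> M" "x - t2 *\<^sub>R u \<in> M" for x t1 t2
  proof (rule ccontr)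
    assume "t1 \<noteq> t2"
    have "(x - t1 *\<^sub>R u) - (x - t2 *\<^sub>R u) \<in> M" using \<open>subspace M\<close> that by (rule subspace_diff)
    moreover have "(x - t1 *\<^sub>R u) - (x - t2 *\<^sub>R u) = (t2 - t1) *\<^sub>R u" by (simp add: algebra_simps)
    ultimately have "(t2 - t1) *\<^sub>R u \<in> M" by simp
    then have "(1 / (t2 - t1)) *\<^sub>R ((t2 - t1) *\<^sub>R u) \<in> M"
      by (rule subspace_scale[OF \<open>subspace M\<close>])
    then show False using \<open>t1 \<noteq> t2\<close> \<open>u \<notin> M\<close> by simp
  qed
  show "(THE t. x - t *\<^sub>R u \<in> M) = t" if "x - t *\<^sub>R u \<in> M" for x t
    using that unique by (intro the_equality) auto
  then show "x - (THE t. x - t *\<^sub>R u \<in> M) *\<^sub>R u \<in> M" if "x \<in> span (insert u M)" for x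
    using that span_breakdown_eq[of x u M] \<open>subspace M\<close> by (metis span_eq_iff)
qed

lemma hahn_banach_step:
  fixes M :: "'v::real_normed_vector set"
  assumes sub: "subspace M" and lin: "linear_on M \<psi>" and "u \<notin> M"
    and gap: "\<And>m t. m \<in> M \<Longrightarrow> \<psi> m + t * \<alpha> \<le> norm (m + t *\<^sub>R u)"
  obtains \<psi>' where "linear_on (span (insert u M)) \<psi>'" "\<forall>x\<in>span (insert u M). \<psi>' x \<le> norm x"
    "\<psi>' u = \<alpha>" "\<forall>m\<in>M. \<psi>' m = \<psi> m"
proof -
  obtain \<tau> where \<tau>M: "\<And>x. x \<in> span (insert u M) \<Longrightarrow> x - \<tau> x *\<^sub>R u \<in> M"
    and \<tau>: "\<And>x t. x - t *\<^sub>R u \<in> M \<Longrightarrow> \<tau> x = t"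
    using span_insert_coordinate[OF sub \<open>u \<notin> M\<close>] by blast
  define \<psi>' where "\<psi>' = (\<lambda>x. \<psi> (x - \<tau> x *\<^sub>R u) + \<tau> x * \<alpha>)"
  have "linear_on (span (insert u M)) \<psi>'"
    unfolding linear_on_def
  proof (intro conjI ballI allI)
    fix x y assume "x \<in> span (insert u M)" "y \<in> span (insert u M)"
    then have mx: "x - \<tau> x *\<^sub>R u \<in> M" and my: "y - \<tau> y *\<^sub>R u \<in> M" using \<tau>M by auto
    have d: "(x + y) - (\<tau> x + \<tau> y) *\<^sub>R u = (x - \<tau> x *\<^sub>R u) + (y - \<tau> y *\<^sub>R u)"
      by (simp add: algebra_simps)
    then have "\<tau> (x + y) = \<tau> x + \<tau> y" using \<tau> subspace_add[OF sub mx my] by metis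
    then show "\<psi>' (x + y) = \<psi>' x + \<psi>' y"
      using lin mx my unfolding \<psi>'_def linear_on_def by (simp add: d distrib_right)
  next
    fix x a assume "x \<in> span (insert u M)"
    then have mx: "x - \<tau> x *\<^sub>R u \<in> M" using \<tau>M by auto
    have d: "a *\<^sub>R x - (a * \<tau> x) *\<^sub>R u = a *\<^sub>R (x - \<tau> x *\<^sub>R u)"
      by (simp add: algebra_simps)
    then have "\<tau> (a *\<^sub>R x) = a * \<tau> x" using \<tau> subspace_scale[OF sub mx] by metis
    then show "\<psi>' (a *\<^sub>R x) = a * \<psi>' x"
      using lin mx unfolding \<psi>'_def linear_on_def by (simp add: d distrib_left)
  qed
  moreover have "\<psi>' x \<le> norm x" if "x \<in> span (insert u M)" for x
    using gap[OF \<tau>M[OF that], of "\<tau> x"] unfolding \<psi>'_def by simp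
  moreover have "\<psi> 0 = 0"
    using lin sub unfolding linear_on_def by (metis mult_zero_left scaleR_zero_left subspace_0)
  then have "\<psi>' u = \<alpha>"
    using \<tau>[of u 1] sub unfolding \<psi>'_def by (simp add: subspace_0)
  moreover have "\<psi>' m = \<psi> m" if "m \<in> M" for m
    using \<tau>[of m 0] that unfolding \<psi>'_def by simp
  ultimately show ?thesis using that by blast
qed

lemma hahn_banach_finite:
  fixes v :: "'v::real_normed_vector"
  assumes "finite A" "v \<noteq> 0"
  shows "\<exists>\<psi>. linear_on (span (insert v A)) \<psi> \<and> (\<forall>x\<in>span (insert v A). \<psi> x \<le> norm x) \<and> \<psi> v = norm v"
  using assms(1)
proof (induction A rule: finite_induct)
  case empty
  have lin0: "linear_on {0::'v} (\<lambda>_. 0)" unfolding linear_on_def by simp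
  have gap: "(\<lambda>_. 0) m + t * norm v \<le> norm (m + t *\<^sub>R v)" if "m \<in> {0}" for m t
    using that by (simp add: abs_ge_self mult_right_mono)
  have "v \<notin> {0}" using \<open>v \<noteq> 0\<close> by simp
  then obtain \<psi> where "linear_on (span (insert v {0})) \<psi>"
    "\<forall>x\<in>span (insert v {0}). \<psi> x \<le> norm x" "\<psi> v = norm v"
    by (rule hahn_banach_step[OF subspace_single_0 lin0 _ gap])
  moreover have "span (insert v {0}) = span (insert v {})" by (metis insert_commute span_insert_0)
  ultimately show ?case by metis
next
  case (insert a A)
  then obtain \<psi> where lin: "linear_on (span (insert v A)) \<psi>"
    and dom: "\<forall>x\<in>span (insert v A). \<psi> x \<le> norm x" and "\<psi> v = norm v"
    by blast
  have eq: "insert v (insert a A) = insert a (insert v A)" by auto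
  show ?case
  proof (cases "a \<in> span (insert v A)")
    case True
    then have "span (insert v (insert a A)) = span (insert v A)" unfolding eq by (rule span_redundant)
    then show ?thesis using lin dom \<open>\<psi> v = norm v\<close> by metis
  next
    case False
    obtain \<alpha> where "\<And>m t. m \<in> span (insert v A) \<Longrightarrow> \<psi> m + t * \<alpha> \<le> norm (m + t *\<^sub>R a)"
      using hahn_banach_gap[OF subspace_span lin dom] by blast
    then obtain \<psi>' where "linear_on (span (insert a (span (insert v A)))) \<psi>'"
      and "\<forall>x\<in>span (insert a (span (insert v A))). \<psi>' x \<le> norm x"
      and "\<forall>m\<in>span (insert v A). \<psi>' m = \<psi> m"
      by (rule hahn_banach_step[OF subspace_span lin False])
    moreover have "span (insert a (span (insert v A))) = span (insert v (insert a A))"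
      unfolding eq span_insert[of a "span (insert v A)"] span_insert[of a "insert v A"] span_span ..
    moreover have "v \<in> span (insert v A)" by (simp add: span_base)
    ultimately show ?thesis using \<open>\<psi> v = norm v\<close> by metis
  qed
qed

lemma norming_functional_finite_dim:
  fixes v :: "'v::real_normed_vector"
  assumes "\<exists>B :: 'v set. finite B \<and> span B = UNIV"
  obtains \<phi> where "linear \<phi>" "\<And>x. \<bar>\<phi> x\<bar> \<le> norm x" "\<phi> v = norm v"
proof (cases "v = 0")
  case True
  then show ?thesis using that[of "\<lambda>_. 0"] by (simp add: linear_zero)
next
  case False
  obtain B :: "'v set" where "finite B" "span B = UNIV" using assms by blast
  moreover have "span (insert v B) = UNIV" using \<open>span B = UNIV\<close> span_mono[of B "insert v B"] by auto
  ultimately have "\<exists>\<psi>. linear_on UNIV \<psi> \<and> (\<forall>x. \<psi> x \<le> norm x) \<and> \<psi> v = norm v"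
    using hahn_banach_finite[OF \<open>finite B\<close> False] by simp
  then obtain \<psi> where lin: "linear_on UNIV \<psi>" and dom: "\<And>x. \<psi> x \<le> norm x" and "\<psi> v = norm v"
    by blast
  have "linear \<psi>" using lin unfolding linear_on_def by (intro linearI) auto
  moreover have "\<psi> (- x) = - \<psi> x" for x
    using lin unfolding linear_on_def by (metis UNIV_I mult_minus1 scaleR_minus1_left)
  then have "\<bar>\<psi> x\<bar> \<le> norm x" for x
    using dom[of x] dom[of "- x"] by (simp add: abs_le_iff)
  ultimately show ?thesis using that \<open>\<psi> v = norm v\<close> by blast
qed

section \<open>Isometric embedding into l-infinity\<close>

lemma countable_dense_finite_dim:
  fixes V :: "'v::real_normed_vector itself"
  assumes "\<exists>B :: 'v set. finite B \<and> span B = UNIV"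
  obtains D :: "'v set" where "countable D" "D \<noteq> {}" "\<And>v e. e > 0 \<Longrightarrow> \<exists>d\<in>D. norm (v - d) < e"
proof -
  obtain B :: "'v set" where B: "finite B" "span B = UNIV" using assms by blast
  define D where "D = (\<lambda>q. \<Sum>b\<in>B. q b *\<^sub>R b) ` (PiE B (\<lambda>_. \<rat>))"
  have "countable D" unfolding D_def using B(1) countable_rat by (intro countable_image countable_PiE) auto
  moreover have "(\<lambda>b\<in>B. 0) \<in> PiE B (\<lambda>_. \<rat>)" by simp
  then have "D \<noteq> {}" unfolding D_def by blast
  moreover have "\<exists>d\<in>D. norm (v - d) < e" if "e > 0" for v e
  proof -
    obtain u where u: "v = (\<Sum>b\<in>B. u b *\<^sub>R b)" using span_finite[OF B(1)] B(2) by blast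
    define S where "S = (\<Sum>b\<in>B. norm b)"
    have "S \<ge> 0" unfolding S_def by (simp add: sum_nonneg)
    define \<delta> where "\<delta> = e / (S + 1)"
    have "\<delta> > 0" unfolding \<delta>_def using \<open>e > 0\<close> \<open>S \<ge> 0\<close> by simp
    have "\<forall>b. \<exists>r. r \<in> \<rat> \<and> u b - \<delta> < r \<and> r < u b + \<delta>"
    proof
      fix b
      have "u b - \<delta> < u b + \<delta>" using \<open>\<delta> > 0\<close> by simp
      from Rats_dense_in_real[OF this] show "\<exists>r. r \<in> \<rat> \<and> u b - \<delta> < r \<and> r < u b + \<delta>" by blast
    qed
    then obtain r where "\<And>b. r b \<in> \<rat> \<and> u b - \<delta> < r b \<and> r b < u b + \<delta>"
      by metis
    then have r: "\<And>b. r b \<in> \<rat>" "\<And>b. \<bar>u b - r b\<bar> \<le> \<delta>"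
      by (simp, smt (verit))
    have "(\<Sum>b\<in>B. r b *\<^sub>R b) \<in> D"
      unfolding D_def using r(1) by (intro image_eqI[of _ _ "restrict r B"]) auto
    moreover have "norm (v - (\<Sum>b\<in>B. r b *\<^sub>R b)) < e"
    proof -
      have "norm (v - (\<Sum>b\<in>B. r b *\<^sub>R b)) \<le> (\<Sum>b\<in>B. \<bar>u b - r b\<bar> * norm b)"
        unfolding u by (simp flip: sum_subtractf scaleR_diff_left add: order_trans[OF norm_sum])
      also have "\<dots> \<le> \<delta> * S"
        unfolding S_def sum_distrib_left by (intro sum_mono mult_right_mono r(2)) simp
      also have "\<dots> < e" unfolding \<delta>_def using \<open>e > 0\<close> \<open>S \<ge> 0\<close> by (simp add: field_simps)
      finally show ?thesis .
    qed
    ultimately show ?thesis by blast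
  qed
  ultimately show ?thesis using that by blast
qed

text \<open>Norming functionals at a dense sequence of vectors give a linear isometry into l-infinity.\<close>
lemma isometric_embedding_into_bcontfun:
  fixes V :: "'v::real_normed_vector itself"
  assumes fd: "\<exists>B :: 'v set. finite B \<and> span B = UNIV"
  obtains T :: "'v \<Rightarrow> (nat \<Rightarrow>\<^sub>C real)" where "linear T" "\<And>v. norm (T v) = norm v"
proof -
  obtain D :: "'v set" where "countable D" "D \<noteq> {}" and dense: "\<And>v e. e > 0 \<Longrightarrow> \<exists>d\<in>D. norm (v - d) < e"
    using countable_dense_finite_dim[OF fd] by blast
  define d where "d = from_nat_into D"
  have "range d = D" unfolding d_def using \<open>countable D\<close> \<open>D \<noteq> {}\<close> by simp
  have "\<forall>k. \<exists>\<phi>. linear \<phi> \<and> (\<forall>x. \<bar>\<phi> x\<bar> \<le> norm x) \<and> \<phi> (d k) = norm (d k)"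
    using norming_functional_finite_dim[OF fd] by metis
  then obtain \<phi> where \<phi>: "\<And>k. linear (\<phi> k)" "\<And>k x. \<bar>\<phi> k x\<bar> \<le> norm x" "\<And>k. \<phi> k (d k) = norm (d k)"
    by metis
  have "(\<lambda>k. \<phi> k v) \<in> bcontfun" for v
    by (rule bcontfun_normI[of _ "norm v"]) (simp_all add: \<phi>(2))
  define T where "T = (\<lambda>v. Bcontfun (\<lambda>k. \<phi> k v))"
  have T_apply: "apply_bcontfun (T v) k = \<phi> k v" for v k
    unfolding T_def using \<open>(\<lambda>k. \<phi> k v) \<in> bcontfun\<close> by (simp add: Bcontfun_inverse)
  have "linear T"
    by (rule linearI) (auto intro!: bcontfun_eqI simp: T_apply linear_add linear_scale \<phi>(1))
  moreover have "norm (T v) = norm v" for v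
  proof (rule antisym)
    show "norm (T v) \<le> norm v" by (rule norm_bound) (simp add: T_apply \<phi>(2))
    show "norm v \<le> norm (T v)"
    proof (rule field_le_epsilon)
      fix e :: real assume "e > 0"
      then obtain k where k: "norm (v - d k) < e / 2" using dense \<open>range d = D\<close> by (metis half_gt_zero imageE)
      have "norm v \<le> norm (d k) + norm (v - d k)" by (rule norm_triangle_sub)
      also have "norm (d k) = \<phi> k v - \<phi> k (v - d k)" using \<phi>(1,3) by (simp add: linear_diff)
      also have "\<phi> k v \<le> norm (T v)" using norm_bounded[of "T v" k] by (simp add: T_apply)
      finally show "norm v \<le> norm (T v) + e" using \<phi>(2)[of k "v - d k"] k by linarith
    qed
  qed
  ultimately show ?thesis using that by blast
qed

section \<open>Extension into l-infinity\<close>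

definition mcshane_extension :: "('z \<Rightarrow> 'z \<Rightarrow> real) \<Rightarrow> real \<Rightarrow> 'z set \<Rightarrow> ('z \<Rightarrow> real) \<Rightarrow> 'z \<Rightarrow> real" where
  "mcshane_extension \<rho> L X h z = Min ((\<lambda>x. h x + L * \<rho> z x) ` X)"

context
  fixes Z X :: "'z set" and \<rho> :: "'z \<Rightarrow> 'z \<Rightarrow> real" and L :: real and h :: "'z \<Rightarrow> real"
  assumes M: "Metric_space Z \<rho>" and "X \<subseteq> Z" "finite X" "X \<noteq> {}" "0 \<le> L"
begin

lemma mcshane_extension_le: "x \<in> X \<Longrightarrow> mcshane_extension \<rho> L X h z \<le> h x + L * \<rho> z x"
  unfolding mcshane_extension_def using \<open>finite X\<close> by (intro Min_le) auto

lemma mcshane_extension_attained: "\<exists>x\<in>X. mcshane_extension \<rho> L X h z = h x + L * \<rho> z x"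
proof -
  have "Min ((\<lambda>x. h x + L * \<rho> z x) ` X) \<in> (\<lambda>x. h x + L * \<rho> z x) ` X"
    using \<open>finite X\<close> \<open>X \<noteq> {}\<close> by (intro Min_in) auto
  then show ?thesis unfolding mcshane_extension_def by blast
qed

lemma mcshane_extension_eq:
  assumes "\<And>x y. x \<in> X \<Longrightarrow> y \<in> X \<Longrightarrow> h x - h y \<le> L * \<rho> x y" and "z \<in> X"
  shows "mcshane_extension \<rho> L X h z = h z"
proof (rule antisym)
  have "\<rho> z z = 0" using Metric_space.zero[OF M, of z z] \<open>z \<in> X\<close> \<open>X \<subseteq> Z\<close> by auto
  then show "mcshane_extension \<rho> L X h z \<le> h z"
    using mcshane_extension_le[OF \<open>z \<in> X\<close>, of z] by simp
  show "h z \<le> mcshane_extension \<rho> L X h z"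
    using mcshane_extension_attained[of z] assms by force
qed

lemma mcshane_extension_lipschitz:
  assumes "z \<in> Z" "z' \<in> Z"
  shows "mcshane_extension \<rho> L X h z \<le> mcshane_extension \<rho> L X h z' + L * \<rho> z z'"
proof -
  obtain x where "x \<in> X" and x: "mcshane_extension \<rho> L X h z' = h x + L * \<rho> z' x"
    using mcshane_extension_attained by blast
  have "L * \<rho> z x \<le> L * \<rho> z z' + L * \<rho> z' x"
    using Metric_space.triangle[OF M assms] \<open>x \<in> X\<close> \<open>X \<subseteq> Z\<close> \<open>0 \<le> L\<close>
    by (metis distrib_left mult_left_mono subsetD)
  then show ?thesis using mcshane_extension_le[OF \<open>x \<in> X\<close>, of z] x by linarith
qed

lemma abs_mcshane_extension_le:
  assumes "\<And>x. x \<in> X \<Longrightarrow> \<bar>h x\<bar> \<le> R" "x0 \<in> X" "z \<in> Z"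
  shows "\<bar>mcshane_extension \<rho> L X h z\<bar> \<le> R + L * \<rho> z x0"
proof -
  obtain x where "x \<in> X" and x: "mcshane_extension \<rho> L X h z = h x + L * \<rho> z x"
    using mcshane_extension_attained by blast
  have "0 \<le> L * \<rho> z x" "0 \<le> L * \<rho> z x0"
    using \<open>0 \<le> L\<close> Metric_space.nonneg[OF M] by simp_all
  then show ?thesis
    using mcshane_extension_le[OF \<open>x0 \<in> X\<close>, of z] x assms(1)[OF \<open>x \<in> X\<close>] assms(1)[OF \<open>x0 \<in> X\<close>]
    by (simp add: abs_le_iff)
qed

end

text \<open>Extend every coordinate by McShane's formula.\<close>
lemma bcontfun_lipschitz_extension_finite:
  fixes F :: "'z \<Rightarrow> (nat \<Rightarrow>\<^sub>C real)"
  assumes M: "Metric_space Z \<rho>" and "X \<subseteq> Z" "finite X" "0 \<le> L" and F: "lipschitz_wrt \<rho> L X F"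
  obtains G where "\<forall>x\<in>X. G x = F x" "lipschitz_wrt \<rho> L Z G"
proof (cases "X = {}")
  case True
  then show ?thesis
    using that[of "\<lambda>_. 0"] Metric_space.nonneg[OF M] \<open>0 \<le> L\<close> by (simp add: lipschitz_wrt_def)
next
  case False
  note mcshane = mcshane_extension_eq[OF M \<open>X \<subseteq> Z\<close> \<open>finite X\<close> False \<open>0 \<le> L\<close>]
    mcshane_extension_lipschitz[OF M \<open>X \<subseteq> Z\<close> \<open>finite X\<close> False \<open>0 \<le> L\<close>]
    abs_mcshane_extension_le[OF M \<open>X \<subseteq> Z\<close> \<open>finite X\<close> False \<open>0 \<le> L\<close>]
  obtain x0 where "x0 \<in> X" using False by blast
  define R where "R = Max ((\<lambda>x. norm (F x)) ` X)"
  have R: "\<bar>F x k\<bar> \<le> R" if "x \<in> X" for x k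
    unfolding R_def using that \<open>finite X\<close> norm_bounded[of "F x" k] by (force intro: Max_ge order_trans)
  have F_lip: "F x k - F y k \<le> L * \<rho> x y" if "x \<in> X" "y \<in> X" for x y k
    using F that norm_bounded[of "F x - F y" k] unfolding lipschitz_wrt_def by force
  define G' where "G' = (\<lambda>z k. mcshane_extension \<rho> L X (\<lambda>x. F x k) z)"
  have "\<bar>G' z k\<bar> \<le> R + L * \<rho> z x0" if "z \<in> Z" for z k
    unfolding G'_def using R \<open>x0 \<in> X\<close> that by (rule mcshane(3))
  then have "G' z \<in> bcontfun" if "z \<in> Z" for z
    using that by (intro bcontfun_normI) auto
  then have G'_apply: "apply_bcontfun (Bcontfun (G' z)) = G' z" if "z \<in> Z" for z
    using that by (simp add: Bcontfun_inverse)
  define G where "G = (\<lambda>z. Bcontfun (G' z))"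
  have "G x = F x" if "x \<in> X" for x
  proof -
    have "G' x = apply_bcontfun (F x)"
      unfolding G'_def using mcshane(1)[OF F_lip that] by blast
    then show ?thesis by (simp add: G_def apply_bcontfun_inverse)
  qed
  moreover have "norm (G z - G z') \<le> L * \<rho> z z'" if "z \<in> Z" "z' \<in> Z" for z z'
  proof (rule norm_bound)
    fix k
    have "G' z k - G' z' k \<le> L * \<rho> z z'" "G' z' k - G' z k \<le> L * \<rho> z z'"
      using mcshane(2)[OF that] mcshane(2)[OF that(2,1)] Metric_space.commute[OF M, of z z']
      unfolding G'_def by (auto simp: algebra_simps)
    then show "norm (apply_bcontfun (G z - G z') k) \<le> L * \<rho> z z'"
      using that by (simp add: G_def G'_apply abs_le_iff)
  qed
  ultimately show ?thesis using that unfolding lipschitz_wrt_def by blast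
qed

lemma PC_admissible_left_inverse:
  fixes V :: "'v::real_normed_vector itself" and W :: "'w::real_normed_vector itself" and T :: "'v \<Rightarrow> 'w"
  assumes PC: "PC_admissible W c V" and "linear T" and iso: "\<And>v. norm (T v) = norm v"
  obtains Q where "linear Q" "\<And>v. Q (T v) = v" "\<And>w. norm (Q w) \<le> c * norm w"
proof -
  obtain P where "linear P" and range_P: "range P = range T" and P_idem: "\<forall>w. P (P w) = P w"
    and norm_P: "\<forall>w. norm (P w) \<le> c * norm w"
    using PC[unfolded PC_admissible_def, rule_format, OF conjI[OF \<open>linear T\<close> allI[OF iso]]] by blast
  have "inj T" using \<open>linear T\<close> iso by (rule linear_isometry_inj)
  define Q where "Q = inv T \<circ> P"
  have T_Q: "T (Q w) = P w" for w
  proof -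
    have "P w \<in> range T" unfolding range_P[symmetric] by simp
    then show ?thesis unfolding Q_def by (simp add: f_inv_into_f)
  qed
  have Q_eqI: "Q w = v" if "P w = T v" for w v
    using T_Q[of w] that \<open>inj T\<close> by (simp add: inj_eq)
  have "linear Q"
    by (rule linearI; rule Q_eqI)
      (simp_all add: T_Q linear_add linear_scale \<open>linear P\<close> \<open>linear T\<close>)
  moreover have "Q (T v) = v" for v
  proof (rule Q_eqI)
    have "T v \<in> range P" using range_P by simp
    then show "P (T v) = T v" using P_idem by auto
  qed
  moreover have "norm (Q w) \<le> c * norm w" for w
    using iso[of "Q w"] norm_P T_Q[of w] by metis
  ultimately show ?thesis using that by blast
qed

lemma lipschitz_extendable_if_PC_admissible:
  fixes V :: "'v::real_normed_vector itself"
  assumes fd: "\<exists>B :: 'v set. finite B \<and> span B = UNIV"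
    and PC: "PC_admissible TYPE(nat \<Rightarrow>\<^sub>C real) c V" and "0 \<le> c"
  shows "lipschitz_extendable (\<lambda>(Z::nat set) \<rho>. finite Z) c V"
proof (rule lipschitz_extendableI)
  obtain T :: "'v \<Rightarrow> (nat \<Rightarrow>\<^sub>C real)" where "linear T" and iso: "\<And>v. norm (T v) = norm v"
    using isometric_embedding_into_bcontfun[OF fd] by blast
  then obtain Q where "linear Q" and Q_T: "\<And>v. Q (T v) = v" and norm_Q: "\<And>w. norm (Q w) \<le> c * norm w"
    using PC_admissible_left_inverse[OF PC] by blast
  fix Z :: "nat set" and \<rho> X L and f :: "nat \<Rightarrow> 'v"
  assume M: "Metric_space Z \<rho>" and "(\<lambda>(Z::nat set) \<rho>. finite Z) Z \<rho>" "X \<subseteq> Z" "0 \<le> L"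
    and f: "lipschitz_wrt \<rho> L X f"
  then have "finite X" using finite_subset by blast
  have "norm (T (f x) - T (f y)) = norm (f x - f y)" for x y
    using iso linear_diff[OF \<open>linear T\<close>] by metis
  then have "lipschitz_wrt \<rho> L X (T \<circ> f)"
    using f unfolding lipschitz_wrt_def by simp
  then obtain G where G: "\<forall>x\<in>X. G x = (T \<circ> f) x" and G_lip: "lipschitz_wrt \<rho> L Z G"
    by (rule bcontfun_lipschitz_extension_finite[OF M \<open>X \<subseteq> Z\<close> \<open>finite X\<close> \<open>0 \<le> L\<close>])
  have "\<forall>x\<in>X. (Q \<circ> G) x = f x"
    using G Q_T by simp
  moreover have "norm (Q (G x) - Q (G y)) \<le> c * L * \<rho> x y" if "x \<in> Z" "y \<in> Z" for x y
  proof -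
    have "norm (Q (G x) - Q (G y)) \<le> c * norm (G x - G y)"
      using norm_Q[of "G x - G y"] \<open>linear Q\<close> by (simp add: linear_diff)
    also have "\<dots> \<le> c * (L * \<rho> x y)"
      using G_lip that \<open>0 \<le> c\<close> unfolding lipschitz_wrt_def by (simp add: mult_left_mono)
    finally show ?thesis by (simp add: mult.assoc)
  qed
  ultimately show "\<exists>g. (\<forall>x\<in>X. g x = f x) \<and> lipschitz_wrt \<rho> (c * L) Z g"
    unfolding lipschitz_wrt_def by (metis comp_apply)
qed

section \<open>Comparison of the constants\<close>

lemma LE_const_on_le:
  fixes P :: "'z set \<Rightarrow> ('z \<Rightarrow> 'z \<Rightarrow> real) \<Rightarrow> bool" and Q :: "'y set \<Rightarrow> ('y \<Rightarrow> 'y \<Rightarrow> real) \<Rightarrow> bool"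
    and V :: "'v::real_normed_vector itself"
  assumes "\<And>c. 0 < c \<Longrightarrow> LE_admissible Q c V \<Longrightarrow> LE_admissible P c V"
  shows "LE_const_on P V \<le> LE_const_on Q V"
  unfolding LE_const_on_def by (rule Inf_admissible_le) (use assms LE_admissible_mono in auto)

lemma LE_const_on_le_LE_f:
  fixes P :: "'z set \<Rightarrow> ('z \<Rightarrow> 'z \<Rightarrow> real) \<Rightarrow> bool" and V :: "'v::real_normed_vector itself"
  assumes fd: "\<exists>B :: 'v set. finite B \<and> span B = UNIV"
  shows "LE_const_on P V \<le> LE_f V"
  unfolding LE_f_def
  by (rule LE_const_on_le)
    (simp add: LE_admissible_iff_lipschitz_extendable lipschitz_extendable_finite_imp_all[OF fd])

lemma LE_f_le_LE_c: "LE_f V \<le> LE_c V"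
  unfolding LE_f_def LE_c_def
  by (rule LE_const_on_le)
    (simp add: LE_admissible_iff_lipschitz_extendable lipschitz_extendable_compact_real_imp_finite_nat)

lemma PC_type_le_LE_f:
  fixes V :: "'v::real_normed_vector itself" and W :: "'w::real_normed_vector itself"
  assumes fd: "\<exists>B :: 'v set. finite B \<and> span B = UNIV"
  shows "PC_type W V \<le> LE_f V"
  unfolding PC_type_def LE_f_def LE_const_on_def
proof (rule Inf_admissible_le)
  fix c :: real assume "0 < c" "LE_admissible (\<lambda>(Z::nat set) \<rho>. finite Z) c V"
  then have "lipschitz_extendable (\<lambda>(Z::'w set) \<rho>. True) c V"
    by (simp add: LE_admissible_iff_lipschitz_extendable lipschitz_extendable_finite_imp_all[OF fd])
  then show "PC_admissible W c V"
    using \<open>0 < c\<close> by (simp add: PC_admissible_if_lipschitz_extendable[OF fd])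
qed (rule LE_admissible_mono)

lemma LE_f_le_PC_type_bcontfun:
  fixes V :: "'v::real_normed_vector itself"
  assumes fd: "\<exists>B :: 'v set. finite B \<and> span B = UNIV"
  shows "LE_f V \<le> PC_type TYPE(nat \<Rightarrow>\<^sub>C real) V"
  unfolding PC_type_def LE_f_def LE_const_on_def
proof (rule Inf_admissible_le)
  fix c :: real assume "0 < c" "PC_admissible TYPE(nat \<Rightarrow>\<^sub>C real) c V"
  then show "LE_admissible (\<lambda>(Z::nat set) \<rho>. finite Z) c V"
    by (simp add: LE_admissible_iff_lipschitz_extendable lipschitz_extendable_if_PC_admissible[OF fd])
qed (rule PC_admissible_mono)

theorem theorem1p5:
  fixes V :: "'v::banach itself"
  assumes fin_dim: "\<exists>B :: 'v set. finite B \<and> span B = UNIV"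
  shows "LE_c V = LE_f V
       \<and> LE_f V \<le> LE_type TYPE(nat) V
       \<and> LE_type TYPE('z) V \<le> LE_f V
       \<and> PC_type TYPE('w::banach) V \<le> LE_f V
       \<and> LE_f V \<le> PC_type TYPE(nat \<Rightarrow>\<^sub>C real) V"
proof (intro conjI)
  show "LE_c V = LE_f V"
    using LE_const_on_le_LE_f[OF fin_dim] LE_f_le_LE_c unfolding LE_c_def by (rule antisym)
  show "LE_f V \<le> LE_type TYPE(nat) V"
    unfolding LE_f_def LE_type_def by (rule LE_const_on_le) (auto simp: LE_admissible_def)
  show "LE_type TYPE('z) V \<le> LE_f V"
    unfolding LE_type_def by (rule LE_const_on_le_LE_f[OF fin_dim])
  show "PC_type TYPE('w::banach) V \<le> LE_f V"
    by (rule PC_type_le_LE_f[OF fin_dim])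
  show "LE_f V \<le> PC_type TYPE(nat \<Rightarrow>\<^sub>C real) V"
    by (rule LE_f_le_PC_type_bcontfun[OF fin_dim])
qed

end
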